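(* Let $D$ be a weak bialgebra with a weak projection $(D,B,f,g)$ onto the weak Hopf algebra $B$ with antipode $\lambda_B$, and let $\phi_D=\mu_D\circ(D\otimes f)$. Then the morphism $t_B^D=\phi_D\circ(D\otimes(\lambda_B\circ g))\circ\delta_D:D\rightarrow D$ is idempotent, and if $p_B^D:D\rightarrow D^B$, $i_B^D:D^B\rightarrow D$ is a splitting of $t_B^D$ (i.e. $t_B^D=i_B^D\circ p_B^D$, $p_B^D\circ i_B^D=id_{D^B}$), then $p_B^D$ is a coequalizer of the pair of morphisms $\phi_D,\beta_D:D\otimes B\rightarrow D$, where $\beta_D=(D\otimes(\varepsilon_D\circ\phi_D))\circ(\delta_D\otimes B)$.
   Context: $\mathcal C$ is a strict braided monoidal category with tensor product $\otimes$, unit object $K$ and braiding $c$, in which every idempotent splits. Algebras have unit $\eta$ and product $\mu$; coalgebras counit $\varepsilon$ and coproduct $\delta$; $f\wedge g=\mu\circ(f\otimes g)\circ\delta$. A weak bialgebra is an algebra and coalgebra $D$ with $\delta_D\circ\mu_D=(\mu_D\otimes\mu_D)\circ(D\otimes c_{D,D}\otimes D)\circ(\delta_D\otimes\delta_D)$; $\varepsilon_D\circ\mu_D\circ(\mu_D\otimes D)=((\varepsilon_D\circ\mu_D)\otimes(\varepsilon_D\circ\mu_D))\circ(D\otimes\delta_D\otimes D)=((\varepsilon_D\circ\mu_D)\otimes(\varepsilon_D\circ\mu_D))\circ(D\otimes(c_{D,D}^{-1}\circ\delta_D)\otimes D)$; $(\delta_D\otimes D)\circ\delta_D\circ\eta_D=(D\otimes\mu_D\otimes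 D)\circ((\delta_D\circ\eta_D)\otimes(\delta_D\circ\eta_D))=(D\otimes(\mu_D\circ c_{D,D}^{-1})\otimes D)\circ((\delta_D\circ\eta_D)\otimes(\delta_D\circ\eta_D))$. It is a weak Hopf algebra if there is $\lambda_D:D\rightarrow D$ (antipode) with $id_D\wedge\lambda_D=\Pi_D^L$, $\lambda_D\wedge id_D=\Pi_D^R$, $\lambda_D\wedge id_D\wedge\lambda_D=\lambda_D$, where $\Pi_D^L=((\varepsilon_D\circ\mu_D)\otimes D)\circ(D\otimes c_{D,D})\circ((\delta_D\circ\eta_D)\otimes D)$ and $\Pi_D^R=(D\otimes(\varepsilon_D\circ\mu_D))\circ(c_{D,D}\otimes D)\circ(D\otimes(\delta_D\circ\eta_D))$. A morphism of weak bialgebras is a morphism that is both an algebra and a coalgebra morphism. Weak projection: $D$ a weak bialgebra, $B$ a weak Hopf algebra, $f:B\rightarrow D$ a morphism of weak bialgebras and $g:D\rightarrow B$ a coalgebra morphism with $g\circ f=id_B$ and $g\circ\mu_D\circ(D\otimes f)=\mu_B\circ(g\otimes B)$; this is denoted $(D,B,f,g)$. *)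

theory Defs
  imports Main
begin

record ('o,'m) bmcat =
  cObj  :: "'o set"
  cArr  :: "'m set"
  cDom  :: "'m \<Rightarrow> 'o"
  cCod  :: "'m \<Rightarrow> 'o"
  cId   :: "'o \<Rightarrow> 'm"
  cComp :: "'m \<Rightarrow> 'm \<Rightarrow> 'm"    (* cComp C g f = g \<circ> f *)
  cTo   :: "'o \<Rightarrow> 'o \<Rightarrow> 'o"
  cTm   :: "'m \<Rightarrow> 'm \<Rightarrow> 'm"
  cUnit :: "'o"
  cBr   :: "'o \<Rightarrow> 'o \<Rightarrow> 'm"    (* braiding c_{A,B} : A \<otimes> B \<rightarrow> B \<otimes> A *)

definition hom :: "('o,'m) bmcat \<Rightarrow> 'o \<Rightarrow> 'o \<Rightarrow> 'm set" where
  "hom C A B = {f \<in> cArr C. cDom C f = A \<and> cCod C f = B}"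

definition braided_strict_monoidal :: "('o,'m) bmcat \<Rightarrow> bool" where
  "braided_strict_monoidal C \<longleftrightarrow>
    \<comment> \<open>category\<close>
    (\<forall>f \<in> cArr C. cDom C f \<in> cObj C \<and> cCod C f \<in> cObj C) \<and>
    (\<forall>A \<in> cObj C. cId C A \<in> hom C A A) \<and>
    (\<forall>A \<in> cObj C. \<forall>B \<in> cObj C. \<forall>E \<in> cObj C. \<forall>f \<in> hom C A B. \<forall>g \<in> hom C B E.
        cComp C g f \<in> hom C A E) \<and>
    (\<forall>A \<in> cObj C. \<forall>B \<in> cObj C. \<forall>f \<in> hom C A B.
        cComp C f (cId C A) = f \<and> cComp C (cId C B) f = f) \<and>
    (\<forall>A \<in> cObj C. \<forall>B \<in> cObj C. \<forall>E \<in> cObj C. \<forall>F \<in> cObj C.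
      \<forall>f \<in> hom C A B. \<forall>g \<in> hom C B E. \<forall>h \<in> hom C E F.
        cComp C h (cComp C g f) = cComp C (cComp C h g) f) \<and>
    \<comment> \<open>tensor is a bifunctor\<close>
    (\<forall>A \<in> cObj C. \<forall>B \<in> cObj C. cTo C A B \<in> cObj C) \<and>
    (\<forall>A \<in> cObj C. \<forall>B \<in> cObj C. \<forall>A' \<in> cObj C. \<forall>B' \<in> cObj C.
      \<forall>f \<in> hom C A B. \<forall>g \<in> hom C A' B'. cTm C f g \<in> hom C (cTo C A A') (cTo C B B')) \<and>
    (\<forall>A \<in> cObj C. \<forall>B \<in> cObj C. cTm C (cId C A) (cId C B) = cId C (cTo C A B)) \<and>
    (\<forall>A \<in> cObj C. \<forall>B \<in> cObj C. \<forall>E \<in> cObj C. \<forall>A' \<in> cObj C. \<forall>B' \<in> cObj C. \<forall>E' \<in> cObj C.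
      \<forall>f \<in> hom C A B. \<forall>g \<in> hom C B E. \<forall>f' \<in> hom C A' B'. \<forall>g' \<in> hom C B' E'.
        cTm C (cComp C g f) (cComp C g' f') = cComp C (cTm C g g') (cTm C f f')) \<and>
    \<comment> \<open>strictness\<close>
    cUnit C \<in> cObj C \<and>
    (\<forall>A \<in> cObj C. \<forall>B \<in> cObj C. \<forall>E \<in> cObj C. cTo C (cTo C A B) E = cTo C A (cTo C B E)) \<and>
    (\<forall>A \<in> cObj C. cTo C (cUnit C) A = A \<and> cTo C A (cUnit C) = A) \<and>
    (\<forall>f \<in> cArr C. \<forall>g \<in> cArr C. \<forall>h \<in> cArr C. cTm C (cTm C f g) h = cTm C f (cTm C g h)) \<and>
    (\<forall>f \<in> cArr C. cTm C (cId C (cUnit C)) f = f \<and> cTm C f (cId C (cUnit C)) = f) \<and>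
    \<comment> \<open>braiding: natural isomorphism satisfying the (strict) hexagon identities\<close>
    (\<forall>A \<in> cObj C. \<forall>B \<in> cObj C. cBr C A B \<in> hom C (cTo C A B) (cTo C B A) \<and>
       (\<exists>h \<in> hom C (cTo C B A) (cTo C A B).
          cComp C h (cBr C A B) = cId C (cTo C A B) \<and> cComp C (cBr C A B) h = cId C (cTo C B A))) \<and>
    (\<forall>A \<in> cObj C. \<forall>B \<in> cObj C. \<forall>A' \<in> cObj C. \<forall>B' \<in> cObj C.
      \<forall>f \<in> hom C A B. \<forall>g \<in> hom C A' B'.
        cComp C (cBr C B B') (cTm C f g) = cComp C (cTm C g f) (cBr C A A')) \<and>
    (\<forall>A \<in> cObj C. \<forall>B \<in> cObj C. \<forall>E \<in> cObj C.
        cBr C A (cTo C B E) = cComp C (cTm C (cId C B) (cBr C A E)) (cTm C (cBr C A B) (cId C E)) \<and>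
        cBr C (cTo C A B) E = cComp C (cTm C (cBr C A E) (cId C B)) (cTm C (cId C A) (cBr C B E))) \<and>
    \<comment> \<open>every idempotent splits\<close>
    (\<forall>A \<in> cObj C. \<forall>e \<in> hom C A A. cComp C e e = e \<longrightarrow>
       (\<exists>X \<in> cObj C. \<exists>p \<in> hom C A X. \<exists>i \<in> hom C X A.
          cComp C i p = e \<and> cComp C p i = cId C X))"

definition cBrInv :: "('o,'m) bmcat \<Rightarrow> 'o \<Rightarrow> 'o \<Rightarrow> 'm" where
  "cBrInv C A B = (THE h. h \<in> hom C (cTo C B A) (cTo C A B) \<and>
      cComp C h (cBr C A B) = cId C (cTo C A B) \<and> cComp C (cBr C A B) h = cId C (cTo C B A))"

definition is_algebra :: "('o,'m) bmcat \<Rightarrow> 'o \<Rightarrow> 'm \<Rightarrow> 'm \<Rightarrow> bool" where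
  "is_algebra C A \<eta> \<mu> \<longleftrightarrow> A \<in> cObj C \<and>
     \<eta> \<in> hom C (cUnit C) A \<and> \<mu> \<in> hom C (cTo C A A) A \<and>
     cComp C \<mu> (cTm C \<mu> (cId C A)) = cComp C \<mu> (cTm C (cId C A) \<mu>) \<and>
     cComp C \<mu> (cTm C \<eta> (cId C A)) = cId C A \<and>
     cComp C \<mu> (cTm C (cId C A) \<eta>) = cId C A"

definition is_coalgebra :: "('o,'m) bmcat \<Rightarrow> 'o \<Rightarrow> 'm \<Rightarrow> 'm \<Rightarrow> bool" where
  "is_coalgebra C A \<epsilon> \<delta> \<longleftrightarrow> A \<in> cObj C \<and>
     \<epsilon> \<in> hom C A (cUnit C) \<and> \<delta> \<in> hom C A (cTo C A A) \<and>
     cComp C (cTm C \<delta> (cId C A)) \<delta> = cComp C (cTm C (cId C A) \<delta>) \<delta> \<and>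
     cComp C (cTm C \<epsilon> (cId C A)) \<delta> = cId C A \<and>
     cComp C (cTm C (cId C A) \<epsilon>) \<delta> = cId C A"

definition conv :: "('o,'m) bmcat \<Rightarrow> 'm \<Rightarrow> 'm \<Rightarrow> 'm \<Rightarrow> 'm \<Rightarrow> 'm" where
  "conv C \<mu> \<delta> f g = cComp C \<mu> (cComp C (cTm C f g) \<delta>)"

definition PiL :: "('o,'m) bmcat \<Rightarrow> 'o \<Rightarrow> 'm \<Rightarrow> 'm \<Rightarrow> 'm \<Rightarrow> 'm \<Rightarrow> 'm" where
  "PiL C D \<eta> \<mu> \<epsilon> \<delta> =
     cComp C (cTm C (cComp C \<epsilon> \<mu>) (cId C D))
       (cComp C (cTm C (cId C D) (cBr C D D)) (cTm C (cComp C \<delta> \<eta>) (cId C D)))"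

definition PiR :: "('o,'m) bmcat \<Rightarrow> 'o \<Rightarrow> 'm \<Rightarrow> 'm \<Rightarrow> 'm \<Rightarrow> 'm \<Rightarrow> 'm" where
  "PiR C D \<eta> \<mu> \<epsilon> \<delta> =
     cComp C (cTm C (cId C D) (cComp C \<epsilon> \<mu>))
       (cComp C (cTm C (cBr C D D) (cId C D)) (cTm C (cId C D) (cComp C \<delta> \<eta>)))"

definition weak_bialgebra :: "('o,'m) bmcat \<Rightarrow> 'o \<Rightarrow> 'm \<Rightarrow> 'm \<Rightarrow> 'm \<Rightarrow> 'm \<Rightarrow> bool" where
  "weak_bialgebra C D \<eta> \<mu> \<epsilon> \<delta> \<longleftrightarrow>
     is_algebra C D \<eta> \<mu> \<and> is_coalgebra C D \<epsilon> \<delta> \<and>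
     cComp C \<delta> \<mu> =
       cComp C (cTm C \<mu> \<mu>)
         (cComp C (cTm C (cTm C (cId C D) (cBr C D D)) (cId C D)) (cTm C \<delta> \<delta>)) \<and>
     cComp C \<epsilon> (cComp C \<mu> (cTm C \<mu> (cId C D))) =
       cComp C (cTm C (cComp C \<epsilon> \<mu>) (cComp C \<epsilon> \<mu>))
         (cTm C (cTm C (cId C D) \<delta>) (cId C D)) \<and>
     cComp C \<epsilon> (cComp C \<mu> (cTm C \<mu> (cId C D))) =
       cComp C (cTm C (cComp C \<epsilon> \<mu>) (cComp C \<epsilon> \<mu>))
         (cTm C (cTm C (cId C D) (cComp C (cBrInv C D D) \<delta>)) (cId C D)) \<and>
     cComp C (cTm C \<delta> (cId C D)) (cComp C \<delta> \<eta>) =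
       cComp C (cTm C (cTm C (cId C D) \<mu>) (cId C D))
         (cTm C (cComp C \<delta> \<eta>) (cComp C \<delta> \<eta>)) \<and>
     cComp C (cTm C \<delta> (cId C D)) (cComp C \<delta> \<eta>) =
       cComp C (cTm C (cTm C (cId C D) (cComp C \<mu> (cBrInv C D D))) (cId C D))
         (cTm C (cComp C \<delta> \<eta>) (cComp C \<delta> \<eta>))"

definition weak_hopf_algebra ::
  "('o,'m) bmcat \<Rightarrow> 'o \<Rightarrow> 'm \<Rightarrow> 'm \<Rightarrow> 'm \<Rightarrow> 'm \<Rightarrow> 'm \<Rightarrow> bool" where
  "weak_hopf_algebra C D \<eta> \<mu> \<epsilon> \<delta> lam \<longleftrightarrow>
     weak_bialgebra C D \<eta> \<mu> \<epsilon> \<delta> \<and> lam \<in> hom C D D \<and>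
     conv C \<mu> \<delta> (cId C D) lam = PiL C D \<eta> \<mu> \<epsilon> \<delta> \<and>
     conv C \<mu> \<delta> lam (cId C D) = PiR C D \<eta> \<mu> \<epsilon> \<delta> \<and>
     conv C \<mu> \<delta> (conv C \<mu> \<delta> lam (cId C D)) lam = lam"

definition algebra_morphism ::
  "('o,'m) bmcat \<Rightarrow> 'o \<Rightarrow> 'm \<Rightarrow> 'm \<Rightarrow> 'o \<Rightarrow> 'm \<Rightarrow> 'm \<Rightarrow> 'm \<Rightarrow> bool" where
  "algebra_morphism C A \<eta>A \<mu>A B \<eta>B \<mu>B f \<longleftrightarrow> f \<in> hom C A B \<and>
     cComp C f \<eta>A = \<eta>B \<and> cComp C f \<mu>A = cComp C \<mu>B (cTm C f f)"

definition coalgebra_morphism ::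
  "('o,'m) bmcat \<Rightarrow> 'o \<Rightarrow> 'm \<Rightarrow> 'm \<Rightarrow> 'o \<Rightarrow> 'm \<Rightarrow> 'm \<Rightarrow> 'm \<Rightarrow> bool" where
  "coalgebra_morphism C A \<epsilon>A \<delta>A B \<epsilon>B \<delta>B f \<longleftrightarrow> f \<in> hom C A B \<and>
     cComp C \<epsilon>B f = \<epsilon>A \<and> cComp C \<delta>B f = cComp C (cTm C f f) \<delta>A"

definition weak_projection ::
  "('o,'m) bmcat \<Rightarrow> 'o \<Rightarrow> 'm \<Rightarrow> 'm \<Rightarrow> 'm \<Rightarrow> 'm \<Rightarrow>
   'o \<Rightarrow> 'm \<Rightarrow> 'm \<Rightarrow> 'm \<Rightarrow> 'm \<Rightarrow> 'm \<Rightarrow> 'm \<Rightarrow> 'm \<Rightarrow> bool" where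
  "weak_projection C D \<eta>D \<mu>D \<epsilon>D \<delta>D B \<eta>B \<mu>B \<epsilon>B \<delta>B lamB f g \<longleftrightarrow>
     weak_bialgebra C D \<eta>D \<mu>D \<epsilon>D \<delta>D \<and>
     weak_hopf_algebra C B \<eta>B \<mu>B \<epsilon>B \<delta>B lamB \<and>
     algebra_morphism C B \<eta>B \<mu>B D \<eta>D \<mu>D f \<and>
     coalgebra_morphism C B \<epsilon>B \<delta>B D \<epsilon>D \<delta>D f \<and>
     coalgebra_morphism C D \<epsilon>D \<delta>D B \<epsilon>B \<delta>B g \<and>
     cComp C g f = cId C B \<and>
     cComp C g (cComp C \<mu>D (cTm C (cId C D) f)) = cComp C \<mu>B (cTm C g (cId C B))"

definition is_coequalizer ::
  "('o,'m) bmcat \<Rightarrow> 'o \<Rightarrow> 'o \<Rightarrow> 'o \<Rightarrow> 'm \<Rightarrow> 'm \<Rightarrow> 'm \<Rightarrow> bool" where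
  "is_coequalizer C S A X u v p \<longleftrightarrow>
     u \<in> hom C S A \<and> v \<in> hom C S A \<and> p \<in> hom C A X \<and>
     cComp C p u = cComp C p v \<and>
     (\<forall>Q \<in> cObj C. \<forall>h \<in> hom C A Q. cComp C h u = cComp C h v \<longrightarrow>
        (\<exists>!w. w \<in> hom C X Q \<and> cComp C w p = h))"

definition phiD :: "('o,'m) bmcat \<Rightarrow> 'o \<Rightarrow> 'm \<Rightarrow> 'm \<Rightarrow> 'm" where
  "phiD C D \<mu>D f = cComp C \<mu>D (cTm C (cId C D) f)"

definition tBD :: "('o,'m) bmcat \<Rightarrow> 'o \<Rightarrow> 'm \<Rightarrow> 'm \<Rightarrow> 'm \<Rightarrow> 'm \<Rightarrow> 'm \<Rightarrow> 'm" where
  "tBD C D \<mu>D \<delta>D lamB f g =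
     cComp C (phiD C D \<mu>D f) (cComp C (cTm C (cId C D) (cComp C lamB g)) \<delta>D)"

definition betaD :: "('o,'m) bmcat \<Rightarrow> 'o \<Rightarrow> 'o \<Rightarrow> 'm \<Rightarrow> 'm \<Rightarrow> 'm \<Rightarrow> 'm \<Rightarrow> 'm" where
  "betaD C D B \<mu>D \<epsilon>D \<delta>D f =
     cComp C (cTm C (cId C D) (cComp C \<epsilon>D (phiD C D \<mu>D f))) (cTm C \<delta>D (cId C B))"

end

theory Submission
  imports Defs
begin

text \<open>
  Write \<open>t = \<phi>\<^sub>D \<circ> k\<close> with \<open>k = (D \<otimes> \<lambda>\<^sub>B \<circ> g) \<circ> \<delta>\<^sub>D\<close>. Everything follows from
  \<open>t \<circ> \<phi>\<^sub>D = t \<circ> \<beta>\<^sub>D\<close> and \<open>\<beta>\<^sub>D \<circ> k = id\<close>: then \<open>t \<circ> t = t \<circ> \<beta>\<^sub>D \<circ> k = t\<close>, and every \<open>h\<close>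
  with \<open>h \<circ> \<phi>\<^sub>D = h \<circ> \<beta>\<^sub>D\<close> satisfies \<open>h = h \<circ> t = (h \<circ> i) \<circ> p\<close>, so the retraction \<open>p\<close> of any
  splitting of \<open>t\<close> is a coequalizer. The identity \<open>\<beta>\<^sub>D \<circ> k = id\<close> comes from \<open>\<epsilon>\<^sub>D \<circ> t = \<epsilon>\<^sub>D\<close>, a
  consequence of \<open>\<epsilon>\<^sub>B \<circ> \<Pi>\<^sup>L\<^sub>B = \<epsilon>\<^sub>B\<close>. After pushing \<open>f\<close> and \<open>g\<close> through \<open>\<mu>\<^sub>D\<close> and \<open>\<delta>\<^sub>D\<close>, the
  identity \<open>t \<circ> \<phi>\<^sub>D = t \<circ> \<beta>\<^sub>D\<close> reduces to the equation
  \<open>(\<lambda>\<^sub>B \<otimes> \<epsilon>\<^sub>B \<circ> \<mu>\<^sub>B) \<circ> (\<delta>\<^sub>B \<otimes> B) = \<mu>\<^sub>B \<circ> (B \<otimes> \<lambda>\<^sub>B \<circ> \<mu>\<^sub>B) \<circ> (c\<^sub>B\<^sub>,\<^sub>B \<otimes> B) \<circ> (B \<otimes> \<delta>\<^sub>B)\<close>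
  of the weak Hopf algebra \<open>B\<close>.

  All equations between composites are proved by rewriting string diagrams: a diagram is a list of
  layers, each a single box between identity wires, and two diagrams with the same normal form under
  the interchange law denote the same arrow.
\<close>

text \<open>
  A typed arrow carries its source and target as words of objects; the layer \<open>(xs, G, ys)\<close> is the
  typed arrow \<open>G\<close> whiskered by the identities of \<open>xs\<close> and \<open>ys\<close>.
\<close>

type_synonym ('o,'m) tarr = "'m \<times> 'o list \<times> 'o list"
type_synonym ('o,'m) layer = "'o list \<times> ('o,'m) tarr \<times> 'o list"
type_synonym ('o,'m) diagram = "('o,'m) layer list \<times> 'o list \<times> 'o list"

lemma append_split:
  assumes eq: "xs @ gs @ ys = xs' @ hs @ ys'" and le: "length xs + length gs \<le> length xs'"
  shows "xs' = xs @ gs @ drop (length xs + length gs) xs'"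
proof -
  have "take (length xs + length gs) (xs @ gs @ ys) = take (length xs + length gs) (xs' @ hs @ ys')"
    using eq by simp
  then have "xs @ gs = take (length xs + length gs) xs'"
    using le by simp
  then show ?thesis
    by (metis append.assoc append_take_drop_id)
qed

section \<open>Strict braided monoidal categories\<close>

locale braided_cat =
  fixes C :: "('o,'m) bmcat"
  assumes dom_cod_Ob: "\<forall>f \<in> cArr C. cDom C f \<in> cObj C \<and> cCod C f \<in> cObj C"
    and Id_hom: "\<forall>A \<in> cObj C. cId C A \<in> hom C A A"
    and comp_hom: "\<forall>A \<in> cObj C. \<forall>B \<in> cObj C. \<forall>E \<in> cObj C. \<forall>f \<in> hom C A B. \<forall>g \<in> hom C B E.
        cComp C g f \<in> hom C A E"
    and comp_Id: "\<forall>A \<in> cObj C. \<forall>B \<in> cObj C. \<forall>f \<in> hom C A B.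
        cComp C f (cId C A) = f \<and> cComp C (cId C B) f = f"
    and comp_assoc_hom: "\<forall>A \<in> cObj C. \<forall>B \<in> cObj C. \<forall>E \<in> cObj C. \<forall>F \<in> cObj C.
      \<forall>f \<in> hom C A B. \<forall>g \<in> hom C B E. \<forall>h \<in> hom C E F.
        cComp C h (cComp C g f) = cComp C (cComp C h g) f"
    and tensor_Ob: "\<forall>A \<in> cObj C. \<forall>B \<in> cObj C. cTo C A B \<in> cObj C"
    and tensor_hom: "\<forall>A \<in> cObj C. \<forall>B \<in> cObj C. \<forall>A' \<in> cObj C. \<forall>B' \<in> cObj C.
      \<forall>f \<in> hom C A B. \<forall>g \<in> hom C A' B'. cTm C f g \<in> hom C (cTo C A A') (cTo C B B')"
    and tensor_Id: "\<forall>A \<in> cObj C. \<forall>B \<in> cObj C. cTm C (cId C A) (cId C B) = cId C (cTo C A B)"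
    and interchange_hom: "\<forall>A \<in> cObj C. \<forall>B \<in> cObj C. \<forall>E \<in> cObj C. \<forall>A' \<in> cObj C. \<forall>B' \<in> cObj C. \<forall>E' \<in> cObj C.
      \<forall>f \<in> hom C A B. \<forall>g \<in> hom C B E. \<forall>f' \<in> hom C A' B'. \<forall>g' \<in> hom C B' E'.
        cTm C (cComp C g f) (cComp C g' f') = cComp C (cTm C g g') (cTm C f f')"
    and unit_Ob: "cUnit C \<in> cObj C"
    and tensor_Ob_assoc: "\<forall>A \<in> cObj C. \<forall>B \<in> cObj C. \<forall>E \<in> cObj C. cTo C (cTo C A B) E = cTo C A (cTo C B E)"
    and tensor_Ob_unit: "\<forall>A \<in> cObj C. cTo C (cUnit C) A = A \<and> cTo C A (cUnit C) = A"
    and tensor_assoc_arr: "\<forall>f \<in> cArr C. \<forall>g \<in> cArr C. \<forall>h \<in> cArr C. cTm C (cTm C f g) h = cTm C f (cTm C g h)"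
    and tensor_unit_arr: "\<forall>f \<in> cArr C. cTm C (cId C (cUnit C)) f = f \<and> cTm C f (cId C (cUnit C)) = f"
    and braid_iso: "\<forall>A \<in> cObj C. \<forall>B \<in> cObj C. cBr C A B \<in> hom C (cTo C A B) (cTo C B A) \<and>
       (\<exists>h \<in> hom C (cTo C B A) (cTo C A B).
          cComp C h (cBr C A B) = cId C (cTo C A B) \<and> cComp C (cBr C A B) h = cId C (cTo C B A))"
    and braid_natural_hom: "\<forall>A \<in> cObj C. \<forall>B \<in> cObj C. \<forall>A' \<in> cObj C. \<forall>B' \<in> cObj C.
      \<forall>f \<in> hom C A B. \<forall>g \<in> hom C A' B'.
        cComp C (cBr C B B') (cTm C f g) = cComp C (cTm C g f) (cBr C A A')"
    and braid_hexagon: "\<forall>A \<in> cObj C. \<forall>B \<in> cObj C. \<forall>E \<in> cObj C.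
        cBr C A (cTo C B E) = cComp C (cTm C (cId C B) (cBr C A E)) (cTm C (cBr C A B) (cId C E)) \<and>
        cBr C (cTo C A B) E = cComp C (cTm C (cBr C A E) (cId C B)) (cTm C (cId C A) (cBr C B E))"

lemma braided_cat_if_braided_strict_monoidal: "braided_strict_monoidal C \<Longrightarrow> braided_cat C"
  unfolding braided_strict_monoidal_def braided_cat_def by (elim conjE) (intro conjI; assumption)

context braided_cat
begin

abbreviation Ob where "Ob \<equiv> cObj C"
definition arr where "arr f \<longleftrightarrow> f \<in> cArr C"
abbreviation dom where "dom \<equiv> cDom C"
abbreviation cod where "cod \<equiv> cCod C"
abbreviation cp (infixr "\<bullet>" 55) where "g \<bullet> f \<equiv> cComp C g f"
abbreviation tm (infixr "\<otimes>" 65) where "f \<otimes> g \<equiv> cTm C f g"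
abbreviation to (infixr "\<odot>" 65) where "A \<odot> B \<equiv> cTo C A B"
abbreviation Id where "Id \<equiv> cId C"
abbreviation K where "K \<equiv> cUnit C"
abbreviation br where "br \<equiv> cBr C"

lemma hom_iff: "f \<in> hom C A B \<longleftrightarrow> arr f \<and> dom f = A \<and> cod f = B"
  by (auto simp: hom_def arr_def)

lemma arr_dom [simp]: "arr f \<Longrightarrow> dom f \<in> Ob" and arr_cod [simp]: "arr f \<Longrightarrow> cod f \<in> Ob"
  using dom_cod_Ob by (auto simp: arr_def)

lemma K_Ob [simp]: "K \<in> Ob"
  by (fact unit_Ob)

lemma to_Ob [simp]: "A \<in> Ob \<Longrightarrow> B \<in> Ob \<Longrightarrow> A \<odot> B \<in> Ob"
  using tensor_Ob by blast

lemma to_assoc [simp]: "A \<in> Ob \<Longrightarrow> B \<in> Ob \<Longrightarrow> E \<in> Ob \<Longrightarrow> (A \<odot> B) \<odot> E = A \<odot> (B \<odot> E)"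
  using tensor_Ob_assoc by blast

lemma to_K [simp]: "A \<in> Ob \<Longrightarrow> K \<odot> A = A" "A \<in> Ob \<Longrightarrow> A \<odot> K = A"
  using tensor_Ob_unit by blast+

lemma Id_typed [simp]:
  "A \<in> Ob \<Longrightarrow> arr (Id A)" "A \<in> Ob \<Longrightarrow> dom (Id A) = A" "A \<in> Ob \<Longrightarrow> cod (Id A) = A"
  using Id_hom[rule_format, of A] by (simp_all add: hom_iff)

lemma comp_typed [simp]:
  assumes "arr f" "arr g" "dom g = cod f"
  shows "arr (g \<bullet> f)" "dom (g \<bullet> f) = dom f" "cod (g \<bullet> f) = cod g"
proof -
  have "g \<bullet> f \<in> hom C (dom f) (cod g)"
    using comp_hom[rule_format, of "dom f" "cod f" "cod g" f g] assms by (simp add: hom_iff)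
  then show "arr (g \<bullet> f)" "dom (g \<bullet> f) = dom f" "cod (g \<bullet> f) = cod g"
    by (auto simp: hom_iff)
qed

lemma tm_typed [simp]:
  assumes "arr f" "arr g"
  shows "arr (f \<otimes> g)" "dom (f \<otimes> g) = dom f \<odot> dom g" "cod (f \<otimes> g) = cod f \<odot> cod g"
proof -
  have "f \<otimes> g \<in> hom C (dom f \<odot> dom g) (cod f \<odot> cod g)"
    using tensor_hom[rule_format, of "dom f" "cod f" "dom g" "cod g" f g] assms by (simp add: hom_iff)
  then show "arr (f \<otimes> g)" "dom (f \<otimes> g) = dom f \<odot> dom g" "cod (f \<otimes> g) = cod f \<odot> cod g"
    by (auto simp: hom_iff)
qed

lemma Id_tm_Id: "A \<in> Ob \<Longrightarrow> B \<in> Ob \<Longrightarrow> Id A \<otimes> Id B = Id (A \<odot> B)"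
  using tensor_Id by blast

lemma comp_Id_left [simp]: "arr f \<Longrightarrow> cod f = B \<Longrightarrow> Id B \<bullet> f = f"
  and comp_Id_right [simp]: "arr f \<Longrightarrow> dom f = A \<Longrightarrow> f \<bullet> Id A = f"
  using comp_Id[rule_format, of "dom f" "cod f" f] arr_dom[of f] arr_cod[of f] by (simp_all add: hom_iff)

lemma comp_assoc [simp]:
  "arr f \<Longrightarrow> arr g \<Longrightarrow> arr h \<Longrightarrow> dom g = cod f \<Longrightarrow> dom h = cod g \<Longrightarrow> (h \<bullet> g) \<bullet> f = h \<bullet> (g \<bullet> f)"
  using comp_assoc_hom[rule_format, of "dom f" "cod f" "cod g" "cod h" f g h] by (auto simp: hom_iff)

lemma interchange:
  "arr f \<Longrightarrow> arr g \<Longrightarrow> arr f' \<Longrightarrow> arr g' \<Longrightarrow> dom g = cod f \<Longrightarrow> dom g' = cod f' \<Longrightarrow>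
   (g \<otimes> g') \<bullet> (f \<otimes> f') = (g \<bullet> f) \<otimes> (g' \<bullet> f')"
  using interchange_hom[rule_format, of "dom f" "cod f" "cod g" "dom f'" "cod f'" "cod g'" f g f' g']
  by (auto simp: hom_iff)

lemma tm_assoc [simp]: "arr f \<Longrightarrow> arr g \<Longrightarrow> arr h \<Longrightarrow> (f \<otimes> g) \<otimes> h = f \<otimes> (g \<otimes> h)"
  using tensor_assoc_arr by (auto simp: arr_def)

lemma tm_Id_K [simp]: "arr f \<Longrightarrow> Id K \<otimes> f = f" "arr f \<Longrightarrow> f \<otimes> Id K = f"
  using tensor_unit_arr by (auto simp: arr_def)

lemma br_typed [simp]:
  "A \<in> Ob \<Longrightarrow> B \<in> Ob \<Longrightarrow> arr (br A B)"
  "A \<in> Ob \<Longrightarrow> B \<in> Ob \<Longrightarrow> dom (br A B) = A \<odot> B"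
  "A \<in> Ob \<Longrightarrow> B \<in> Ob \<Longrightarrow> cod (br A B) = B \<odot> A"
  using braid_iso[rule_format, of A B] by (simp_all add: hom_iff)

lemma br_natural: "arr f \<Longrightarrow> arr g \<Longrightarrow> br (cod f) (cod g) \<bullet> (f \<otimes> g) = (g \<otimes> f) \<bullet> br (dom f) (dom g)"
  using braid_natural_hom[rule_format, of "dom f" "cod f" "dom g" "cod g" f g] by (auto simp: hom_iff)

lemma br_to_right: "A \<in> Ob \<Longrightarrow> B \<in> Ob \<Longrightarrow> E \<in> Ob \<Longrightarrow> br A (B \<odot> E) = (Id B \<otimes> br A E) \<bullet> (br A B \<otimes> Id E)"
  and br_to_left: "A \<in> Ob \<Longrightarrow> B \<in> Ob \<Longrightarrow> E \<in> Ob \<Longrightarrow> br (A \<odot> B) E = (br A E \<otimes> Id B) \<bullet> (Id A \<otimes> br B E)"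
  using braid_hexagon by blast+

lemma br_inv:
  assumes "A \<in> Ob" "B \<in> Ob"
  shows "arr (cBrInv C A B)" "dom (cBrInv C A B) = B \<odot> A" "cod (cBrInv C A B) = A \<odot> B"
    "cBrInv C A B \<bullet> br A B = Id (A \<odot> B)" "br A B \<bullet> cBrInv C A B = Id (B \<odot> A)"
proof -
  obtain h where h: "h \<in> hom C (B \<odot> A) (A \<odot> B)" "h \<bullet> br A B = Id (A \<odot> B)" "br A B \<bullet> h = Id (B \<odot> A)"
    using braid_iso assms by blast
  have h_typed: "arr h" "dom h = B \<odot> A" "cod h = A \<odot> B"
    using h(1) by (simp_all add: hom_iff)
  have unique: "h' = h" if "h' \<in> hom C (B \<odot> A) (A \<odot> B)" "h' \<bullet> br A B = Id (A \<odot> B)" for h'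
  proof -
    have h'_typed: "arr h'" "dom h' = B \<odot> A" "cod h' = A \<odot> B"
      using that(1) by (simp_all add: hom_iff)
    have "h' = h' \<bullet> (br A B \<bullet> h)"
      using h(3) h'_typed by simp
    also have "\<dots> = (h' \<bullet> br A B) \<bullet> h"
      using assms h_typed h'_typed by simp
    finally show ?thesis
      using that(2) h_typed by simp
  qed
  have "cBrInv C A B = h"
    unfolding cBrInv_def using h unique by blast
  then show "arr (cBrInv C A B)" "dom (cBrInv C A B) = B \<odot> A" "cod (cBrInv C A B) = A \<odot> B"
    "cBrInv C A B \<bullet> br A B = Id (A \<odot> B)" "br A B \<bullet> cBrInv C A B = Id (B \<odot> A)"
    using h h_typed by simp_all
qed

lemma br_cancel:
  assumes "A \<in> Ob" "B \<in> Ob" "br A B \<bullet> x = br A B \<bullet> y"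
    and "arr x" "arr y" "cod x = A \<odot> B" "cod y = A \<odot> B"
  shows "x = y"
proof -
  have "x = (cBrInv C A B \<bullet> br A B) \<bullet> x"
    using assms br_inv by simp
  also have "\<dots> = cBrInv C A B \<bullet> (br A B \<bullet> y)"
    using assms br_inv by (subst comp_assoc) simp_all
  also have "\<dots> = (cBrInv C A B \<bullet> br A B) \<bullet> y"
    using assms br_inv by (subst comp_assoc) simp_all
  finally show ?thesis
    using assms br_inv by simp
qed

lemma br_K_left: assumes "A \<in> Ob" shows "br K A = Id A"
proof -
  have idem: "br K A = br K A \<bullet> br K A"
    using br_to_left[of K K A] assms by simp
  show ?thesis
    by (rule br_cancel[of K A]) (use idem assms in simp_all)
qed

lemma br_K_right: assumes "A \<in> Ob" shows "br A K = Id A"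
proof -
  have idem: "br A K = br A K \<bullet> br A K"
    using br_to_right[of A K K] assms by simp
  show ?thesis
    by (rule br_cancel[of A K]) (use idem assms in simp_all)
qed

lemma coequalizer_of_section_factorization:
  assumes phi: "\<phi> \<in> hom C S A" and beta: "\<beta> \<in> hom C S A" and k: "k \<in> hom C A S"
    and factor: "t = \<phi> \<bullet> k" and coequalizes: "t \<bullet> \<phi> = t \<bullet> \<beta>" and retraction: "\<beta> \<bullet> k = Id A"
  shows "t \<bullet> t = t"
    and "X \<in> Ob \<Longrightarrow> p \<in> hom C A X \<Longrightarrow> i \<in> hom C X A \<Longrightarrow> i \<bullet> p = t \<Longrightarrow> p \<bullet> i = Id X \<Longrightarrow>
         is_coequalizer C S A X \<phi> \<beta> p"
proof -
  have typed: "arr \<phi>" "dom \<phi> = S" "cod \<phi> = A" "arr \<beta>" "dom \<beta> = S" "cod \<beta> = A"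
    "arr k" "dom k = A" "cod k = S"
    using phi beta k by (auto simp: hom_iff)
  have t_typed: "arr t" "dom t = A" "cod t = A"
    using typed factor by simp_all
  have absorb: "h \<bullet> t = h" if "h \<bullet> \<phi> = h \<bullet> \<beta>" "arr h" "dom h = A" for h
  proof -
    have "h \<bullet> t = (h \<bullet> \<phi>) \<bullet> k"
      using that(2,3) typed factor by simp
    also have "\<dots> = (h \<bullet> \<beta>) \<bullet> k"
      by (simp only: that(1))
    also have "\<dots> = h \<bullet> (\<beta> \<bullet> k)"
      using that typed by simp
    finally show ?thesis
      using that retraction by simp
  qed
  show "t \<bullet> t = t"
    using absorb[OF coequalizes t_typed(1,2)] .
  assume X: "X \<in> Ob" and p: "p \<in> hom C A X" and i: "i \<in> hom C X A"
    and split: "i \<bullet> p = t" "p \<bullet> i = Id X"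
  have pi_typed: "arr p" "dom p = A" "cod p = X" "arr i" "dom i = X" "cod i = A"
    using p i by (auto simp: hom_iff)
  have "p \<bullet> t = (p \<bullet> i) \<bullet> p"
    using split(1) pi_typed by simp
  then have p_t: "p \<bullet> t = p"
    using split(2) pi_typed by simp
  have "p \<bullet> \<phi> = (p \<bullet> t) \<bullet> \<phi>" and "p \<bullet> \<beta> = (p \<bullet> t) \<bullet> \<beta>"
    using p_t by simp_all
  then have p_coequalizes: "p \<bullet> \<phi> = p \<bullet> \<beta>"
    using coequalizes pi_typed typed t_typed by simp
  show "is_coequalizer C S A X \<phi> \<beta> p"
    unfolding is_coequalizer_def
  proof (intro conjI ballI impI phi beta p p_coequalizes)
    fix Q h
    assume "Q \<in> Ob" "h \<in> hom C A Q" and h_coequalizes: "h \<bullet> \<phi> = h \<bullet> \<beta>"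
    then have h_typed: "arr h" "dom h = A" "cod h = Q"
      by (auto simp: hom_iff)
    have factors: "(h \<bullet> i) \<bullet> p = h"
      using absorb[OF h_coequalizes h_typed(1,2)] split(1) h_typed pi_typed by simp
    show "\<exists>!w. w \<in> hom C X Q \<and> w \<bullet> p = h"
    proof (rule ex1I[of _ "h \<bullet> i"])
      show "h \<bullet> i \<in> hom C X Q \<and> (h \<bullet> i) \<bullet> p = h"
        using h_typed pi_typed factors by (simp add: hom_iff)
    next
      fix w
      assume w: "w \<in> hom C X Q \<and> w \<bullet> p = h"
      then have "arr w" "dom w = X"
        by (auto simp: hom_iff)
      then have "w = (w \<bullet> p) \<bullet> i"
        using split(2) pi_typed by simp
      also have "\<dots> = h \<bullet> i"
        using w by simp
      finally show "w = h \<bullet> i" .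
    qed
  qed
qed

section \<open>String diagrams\<close>

definition wobj :: "'o list \<Rightarrow> 'o" where
  "wobj xs = foldr (\<lambda>a b. a \<odot> b) xs K"

abbreviation mo :: "('o,'m) tarr \<Rightarrow> 'm" where "mo x \<equiv> fst x"
abbreviation src :: "('o,'m) tarr \<Rightarrow> 'o list" where "src x \<equiv> fst (snd x)"
abbreviation tgt :: "('o,'m) tarr \<Rightarrow> 'o list" where "tgt x \<equiv> snd (snd x)"

definition typed :: "('o,'m) tarr \<Rightarrow> bool" where
  "typed x \<longleftrightarrow> arr (mo x) \<and> dom (mo x) = wobj (src x) \<and> cod (mo x) = wobj (tgt x) \<and>
     set (src x) \<subseteq> Ob \<and> set (tgt x) \<subseteq> Ob"

definition cmp :: "('o,'m) tarr \<Rightarrow> ('o,'m) tarr \<Rightarrow> ('o,'m) tarr" (infixr "\<cdot>" 55) where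
  "g \<cdot> f = (mo g \<bullet> mo f, src f, tgt g)"
definition tns :: "('o,'m) tarr \<Rightarrow> ('o,'m) tarr \<Rightarrow> ('o,'m) tarr" (infixr "\<star>" 65) where
  "f \<star> g = (mo f \<otimes> mo g, src f @ src g, tgt f @ tgt g)"
definition tid :: "'o list \<Rightarrow> ('o,'m) tarr" where
  "tid xs = (Id (wobj xs), xs, xs)"
definition whisk :: "'o list \<Rightarrow> ('o,'m) tarr \<Rightarrow> 'o list \<Rightarrow> ('o,'m) tarr" where
  "whisk xs G ys = tid xs \<star> G \<star> tid ys"

lemma tarr_simps [simp]:
  "src (g \<cdot> f) = src f" "tgt (g \<cdot> f) = tgt g" "mo (g \<cdot> f) = mo g \<bullet> mo f"
  "src (f \<star> g) = src f @ src g" "tgt (f \<star> g) = tgt f @ tgt g" "mo (f \<star> g) = mo f \<otimes> mo g"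
  "src (tid xs) = xs" "tgt (tid xs) = xs" "mo (tid xs) = Id (wobj xs)"
  "src (whisk xs G ys) = xs @ src G @ ys" "tgt (whisk xs G ys) = xs @ tgt G @ ys"
  by (simp_all add: cmp_def tns_def tid_def whisk_def)

lemma wobj_Nil [simp]: "wobj [] = K" and wobj_Cons: "wobj (x # xs) = x \<odot> wobj xs"
  by (simp_all add: wobj_def)

lemma wobj_single [simp]: "x \<in> Ob \<Longrightarrow> wobj [x] = x"
  by (simp add: wobj_def)

lemma wobj_Ob [simp]: "set xs \<subseteq> Ob \<Longrightarrow> wobj xs \<in> Ob"
  by (induct xs) (auto simp: wobj_Cons)

lemma wobj_append: "set xs \<subseteq> Ob \<Longrightarrow> set ys \<subseteq> Ob \<Longrightarrow> wobj (xs @ ys) = wobj xs \<odot> wobj ys"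
  by (induct xs) (auto simp: wobj_Cons)

lemma tarr_eqI: "mo x = mo y \<Longrightarrow> src x = src y \<Longrightarrow> tgt x = tgt y \<Longrightarrow> x = y"
  by (simp add: prod_eq_iff)

lemma typed_cmp [simp]: "typed f \<Longrightarrow> typed g \<Longrightarrow> src g = tgt f \<Longrightarrow> typed (g \<cdot> f)"
  by (simp add: typed_def)

lemma typed_tns [simp]: "typed f \<Longrightarrow> typed g \<Longrightarrow> typed (f \<star> g)"
  by (simp add: typed_def wobj_append)

lemma typed_tid [simp]: "set xs \<subseteq> Ob \<Longrightarrow> typed (tid xs)"
  by (simp add: typed_def)

lemma typed_whisk [simp]: "typed G \<Longrightarrow> set xs \<subseteq> Ob \<Longrightarrow> set ys \<subseteq> Ob \<Longrightarrow> typed (whisk xs G ys)"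
  by (simp add: whisk_def)

lemma typedD:
  "typed f \<Longrightarrow> arr (mo f)" "typed f \<Longrightarrow> dom (mo f) = wobj (src f)" "typed f \<Longrightarrow> cod (mo f) = wobj (tgt f)"
  "typed f \<Longrightarrow> set (src f) \<subseteq> Ob" "typed f \<Longrightarrow> set (tgt f) \<subseteq> Ob"
  by (simp_all add: typed_def)

lemma cmp_assoc:
  "typed f \<Longrightarrow> typed g \<Longrightarrow> typed h \<Longrightarrow> src g = tgt f \<Longrightarrow> src h = tgt g \<Longrightarrow> (h \<cdot> g) \<cdot> f = h \<cdot> (g \<cdot> f)"
  by (rule tarr_eqI) (simp_all add: typed_def)

lemma tid_cmp: "typed f \<Longrightarrow> tgt f = xs \<Longrightarrow> tid xs \<cdot> f = f"
  by (rule tarr_eqI) (auto simp: typed_def)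

lemma cmp_tid: "typed f \<Longrightarrow> src f = xs \<Longrightarrow> f \<cdot> tid xs = f"
  by (rule tarr_eqI) (auto simp: typed_def)

lemma tid_tns_tid: "set xs \<subseteq> Ob \<Longrightarrow> set ys \<subseteq> Ob \<Longrightarrow> tid xs \<star> tid ys = tid (xs @ ys)"
  by (rule tarr_eqI) (simp_all add: wobj_append Id_tm_Id)

lemma tns_assoc: "typed f \<Longrightarrow> typed g \<Longrightarrow> typed h \<Longrightarrow> (f \<star> g) \<star> h = f \<star> (g \<star> h)"
  by (rule tarr_eqI) (simp_all add: typed_def)

lemma tid_Nil_tns: "typed f \<Longrightarrow> tid [] \<star> f = f" and tns_tid_Nil: "typed f \<Longrightarrow> f \<star> tid [] = f"
  by (rule tarr_eqI; simp add: typed_def)+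

lemma tns_interchange:
  "typed f \<Longrightarrow> typed g \<Longrightarrow> typed f' \<Longrightarrow> typed g' \<Longrightarrow> src g = tgt f \<Longrightarrow> src g' = tgt f' \<Longrightarrow>
   (g \<star> g') \<cdot> (f \<star> f') = (g \<cdot> f) \<star> (g' \<cdot> f')"
  by (rule tarr_eqI) (simp_all add: typed_def interchange)

lemma whisk_tns_tid: "typed G \<Longrightarrow> set xs \<subseteq> Ob \<Longrightarrow> set ys \<subseteq> Ob \<Longrightarrow> set zs \<subseteq> Ob \<Longrightarrow>
   whisk xs G ys \<star> tid zs = whisk xs G (ys @ zs)"
  by (simp add: whisk_def tns_assoc tid_tns_tid)

lemma tid_tns_whisk: "typed G \<Longrightarrow> set xs \<subseteq> Ob \<Longrightarrow> set ys \<subseteq> Ob \<Longrightarrow> set zs \<subseteq> Ob \<Longrightarrow>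
   tid zs \<star> whisk xs G ys = whisk (zs @ xs) G ys"
  by (simp add: whisk_def flip: tns_assoc tid_tns_tid)

lemma whisk_Nil_Nil: "typed G \<Longrightarrow> whisk [] G [] = G"
  by (simp add: whisk_def tid_Nil_tns tns_tid_Nil)

lemma whisk_tns_whisk_right_first:
  assumes "typed G" "typed H" "set xs \<subseteq> Ob" "set ys \<subseteq> Ob" "set xs' \<subseteq> Ob" "set ys' \<subseteq> Ob"
  shows "whisk xs G ys \<star> whisk xs' H ys' =
    whisk xs G (ys @ xs' @ tgt H @ ys') \<cdot> whisk (xs @ src G @ ys @ xs') H ys'"
proof -
  have "whisk xs G ys \<star> whisk xs' H ys' =
      (whisk xs G ys \<cdot> tid (src (whisk xs G ys))) \<star> (tid (tgt (whisk xs' H ys')) \<cdot> whisk xs' H ys')"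
    using assms by (simp add: tid_cmp cmp_tid typedD)
  also have "\<dots> = (whisk xs G ys \<star> tid (tgt (whisk xs' H ys'))) \<cdot> (tid (src (whisk xs G ys)) \<star> whisk xs' H ys')"
    using assms by (subst tns_interchange) (simp_all add: typedD)
  also have "\<dots> = whisk xs G (ys @ xs' @ tgt H @ ys') \<cdot> whisk (xs @ src G @ ys @ xs') H ys'"
    using assms by (simp add: whisk_tns_tid tid_tns_whisk typedD)
  finally show ?thesis .
qed

lemma whisk_tns_whisk_left_first:
  assumes "typed G" "typed H" "set xs \<subseteq> Ob" "set ys \<subseteq> Ob" "set xs' \<subseteq> Ob" "set ys' \<subseteq> Ob"
  shows "whisk xs G ys \<star> whisk xs' H ys' =
    whisk (xs @ tgt G @ ys @ xs') H ys' \<cdot> whisk xs G (ys @ xs' @ src H @ ys')"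
proof -
  have "whisk xs G ys \<star> whisk xs' H ys' =
      (tid (tgt (whisk xs G ys)) \<cdot> whisk xs G ys) \<star> (whisk xs' H ys' \<cdot> tid (src (whisk xs' H ys')))"
    using assms by (simp add: tid_cmp cmp_tid typedD)
  also have "\<dots> = (tid (tgt (whisk xs G ys)) \<star> whisk xs' H ys') \<cdot> (whisk xs G ys \<star> tid (src (whisk xs' H ys')))"
    using assms by (subst tns_interchange) (simp_all add: typedD)
  also have "\<dots> = whisk (xs @ tgt G @ ys @ xs') H ys' \<cdot> whisk xs G (ys @ xs' @ src H @ ys')"
    using assms by (simp add: whisk_tns_tid tid_tns_whisk typedD)
  finally show ?thesis .
qed

lemma whisk_slide:
  assumes "typed G" "typed H" "set xs \<subseteq> Ob" "set ys \<subseteq> Ob" "set xs' \<subseteq> Ob" "set ys' \<subseteq> Ob"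
    and eq: "xs @ src G @ ys = xs' @ tgt H @ ys'" and le: "length xs + length (src G) \<le> length xs'"
  shows "whisk xs G ys \<cdot> whisk xs' H ys' =
    whisk (xs @ tgt G @ drop (length xs + length (src G)) xs') H ys' \<cdot>
    whisk xs G (drop (length xs + length (src G)) xs' @ src H @ ys')"
proof -
  define zs where "zs = drop (length xs + length (src G)) xs'"
  have xs': "xs' = xs @ src G @ zs"
    using append_split[OF eq le] by (simp add: zs_def)
  have ys: "ys = zs @ tgt H @ ys'"
    using eq unfolding xs' by simp
  have "set zs \<subseteq> Ob"
    using assms(5) xs' by auto
  then have "whisk xs G ys \<cdot> whisk xs' H ys' = whisk xs G zs \<star> whisk [] H ys'"
    and "whisk xs G zs \<star> whisk [] H ys' = whisk (xs @ tgt G @ zs) H ys' \<cdot> whisk xs G (zs @ src H @ ys')"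
    using whisk_tns_whisk_right_first[of G H xs zs "[]" ys'] whisk_tns_whisk_left_first[of G H xs zs "[]" ys']
      assms
    unfolding xs' ys by simp_all
  then show ?thesis
    unfolding zs_def by simp
qed

definition tbr :: "'o \<Rightarrow> 'o \<Rightarrow> ('o,'m) tarr" where
  "tbr x y = (br x y, [x,y], [y,x])"
definition tbri :: "'o \<Rightarrow> 'o \<Rightarrow> ('o,'m) tarr" where
  "tbri x y = (cBrInv C x y, [y,x], [x,y])"

lemma tbr_simps [simp]:
  "src (tbr x y) = [x,y]" "tgt (tbr x y) = [y,x]" "mo (tbr x y) = br x y"
  "src (tbri x y) = [y,x]" "tgt (tbri x y) = [x,y]" "mo (tbri x y) = cBrInv C x y"
  by (simp_all add: tbr_def tbri_def)

lemma typed_tbr [simp]: "x \<in> Ob \<Longrightarrow> y \<in> Ob \<Longrightarrow> typed (tbr x y)"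
  by (simp add: tbr_def typed_def wobj_Cons)

lemma typed_tbri [simp]: "x \<in> Ob \<Longrightarrow> y \<in> Ob \<Longrightarrow> typed (tbri x y)"
  by (simp add: tbri_def typed_def wobj_Cons br_inv)

fun braid_obj_word :: "'o \<Rightarrow> 'o list \<Rightarrow> ('o,'m) tarr" where
  "braid_obj_word x [] = tid [x]"
| "braid_obj_word x (y # ys) = (tid [y] \<star> braid_obj_word x ys) \<cdot> (tbr x y \<star> tid ys)"

fun braid_words :: "'o list \<Rightarrow> 'o list \<Rightarrow> ('o,'m) tarr" where
  "braid_words [] ys = tid ys"
| "braid_words (x # xs) ys = (braid_obj_word x ys \<star> tid xs) \<cdot> (tid [x] \<star> braid_words xs ys)"

lemma braid_obj_word_typed:
  "x \<in> Ob \<Longrightarrow> set ys \<subseteq> Ob \<Longrightarrow> typed (braid_obj_word x ys) \<and>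
     src (braid_obj_word x ys) = x # ys \<and> tgt (braid_obj_word x ys) = ys @ [x] \<and>
     mo (braid_obj_word x ys) = br x (wobj ys)"
  by (induct ys) (simp_all add: br_K_right wobj_Cons br_to_right)

lemma braid_words_typed:
  "set xs \<subseteq> Ob \<Longrightarrow> set ys \<subseteq> Ob \<Longrightarrow> typed (braid_words xs ys) \<and>
     src (braid_words xs ys) = xs @ ys \<and> tgt (braid_words xs ys) = ys @ xs \<and>
     mo (braid_words xs ys) = br (wobj xs) (wobj ys)"
  by (induct xs) (simp_all add: br_K_left braid_obj_word_typed wobj_Cons br_to_left wobj_append)

lemma braid_words_natural:
  "typed f \<Longrightarrow> typed g \<Longrightarrow> braid_words (tgt f) (tgt g) \<cdot> (f \<star> g) = (g \<star> f) \<cdot> braid_words (src f) (src g)"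
  using braid_words_typed[of "tgt f" "tgt g"] braid_words_typed[of "src f" "src g"] br_natural[of "mo f" "mo g"]
  by (intro tarr_eqI) (simp_all add: typed_def)

abbreviation lleft :: "('o,'m) layer \<Rightarrow> 'o list" where "lleft L \<equiv> fst L"
abbreviation lbox :: "('o,'m) layer \<Rightarrow> ('o,'m) tarr" where "lbox L \<equiv> fst (snd L)"
abbreviation lright :: "('o,'m) layer \<Rightarrow> 'o list" where "lright L \<equiv> snd (snd L)"

definition layer_arr :: "('o,'m) layer \<Rightarrow> ('o,'m) tarr" where
  "layer_arr L = whisk (lleft L) (lbox L) (lright L)"
definition layer_src :: "('o,'m) layer \<Rightarrow> 'o list" where
  "layer_src L = lleft L @ src (lbox L) @ lright L"
definition layer_tgt :: "('o,'m) layer \<Rightarrow> 'o list" where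
  "layer_tgt L = lleft L @ tgt (lbox L) @ lright L"
definition layer_typed :: "('o,'m) layer \<Rightarrow> bool" where
  "layer_typed L \<longleftrightarrow> typed (lbox L) \<and> set (lleft L) \<subseteq> Ob \<and> set (lright L) \<subseteq> Ob"

text \<open>A chain lists its layers from the output end: its head is applied last.\<close>

fun chain :: "('o,'m) layer list \<Rightarrow> 'o list \<Rightarrow> 'o list \<Rightarrow> bool" where
  "chain [] s t \<longleftrightarrow> s = t"
| "chain (L # Ls) s t \<longleftrightarrow> layer_typed L \<and> layer_tgt L = t \<and> chain Ls s (layer_src L)"

fun chain_arr :: "('o,'m) layer list \<Rightarrow> 'o list \<Rightarrow> ('o,'m) tarr" where
  "chain_arr [] s = tid s"
| "chain_arr (L # Ls) s = layer_arr L \<cdot> chain_arr Ls s"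

lemma layer_arr_typed:
  "layer_typed L \<Longrightarrow> typed (layer_arr L) \<and> src (layer_arr L) = layer_src L \<and> tgt (layer_arr L) = layer_tgt L"
  by (simp add: layer_typed_def layer_arr_def layer_src_def layer_tgt_def)

lemma chain_arr_typed:
  "chain Ls s t \<Longrightarrow> set s \<subseteq> Ob \<Longrightarrow> typed (chain_arr Ls s) \<and> src (chain_arr Ls s) = s \<and> tgt (chain_arr Ls s) = t"
proof (induct Ls arbitrary: t)
  case (Cons L Ls)
  then show ?case
    using layer_arr_typed[of L] by auto
qed simp

lemma chain_append:
  "chain Lg sg tg \<Longrightarrow> chain Lf sf sg \<Longrightarrow> set sf \<subseteq> Ob \<Longrightarrow>
   chain (Lg @ Lf) sf tg \<and> chain_arr (Lg @ Lf) sf = chain_arr Lg sg \<cdot> chain_arr Lf sf"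
proof (induct Lg arbitrary: tg)
  case Nil
  then show ?case
    using chain_arr_typed[of Lf sf sg] by (simp add: tid_cmp)
next
  case (Cons L Lg)
  have Lf_typed: "typed (chain_arr Lf sf)" "src (chain_arr Lf sf) = sf" "tgt (chain_arr Lf sf) = sg"
    using chain_arr_typed[of Lf sf sg] Cons by auto
  then have "set sg \<subseteq> Ob"
    using typedD(5) by blast
  then have Lg_typed: "typed (chain_arr Lg sg)" "src (chain_arr Lg sg) = sg" "tgt (chain_arr Lg sg) = layer_src L"
    using chain_arr_typed[of Lg sg "layer_src L"] Cons by auto
  have L_typed: "typed (layer_arr L)" "src (layer_arr L) = layer_src L"
    using layer_arr_typed[of L] Cons by auto
  have "chain (Lg @ Lf) sf (layer_src L) \<and> chain_arr (Lg @ Lf) sf = chain_arr Lg sg \<cdot> chain_arr Lf sf"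
    using Cons(1)[of "layer_src L"] Cons(2-4) by auto
  then show ?case
    using Cons(2) Lf_typed Lg_typed L_typed by (simp add: cmp_assoc)
qed

abbreviation dlayers :: "('o,'m) diagram \<Rightarrow> ('o,'m) layer list" where "dlayers D \<equiv> fst D"
abbreviation dsrc :: "('o,'m) diagram \<Rightarrow> 'o list" where "dsrc D \<equiv> fst (snd D)"
abbreviation dtgt :: "('o,'m) diagram \<Rightarrow> 'o list" where "dtgt D \<equiv> snd (snd D)"

definition wfd :: "('o,'m) diagram \<Rightarrow> bool" where
  "wfd D \<longleftrightarrow> chain (dlayers D) (dsrc D) (dtgt D) \<and> set (dsrc D) \<subseteq> Ob \<and> set (dtgt D) \<subseteq> Ob"
definition darr :: "('o,'m) diagram \<Rightarrow> ('o,'m) tarr" where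
  "darr D = chain_arr (dlayers D) (dsrc D)"

lemma darr_typed: "wfd D \<Longrightarrow> typed (darr D) \<and> src (darr D) = dsrc D \<and> tgt (darr D) = dtgt D"
  unfolding wfd_def darr_def using chain_arr_typed by blast

definition dcmp :: "('o,'m) diagram \<Rightarrow> ('o,'m) diagram \<Rightarrow> ('o,'m) diagram" (infixr "\<diamond>" 55) where
  "g \<diamond> f = (dlayers g @ dlayers f, dsrc f, dtgt g)"
definition pad_right :: "'o list \<Rightarrow> ('o,'m) layer \<Rightarrow> ('o,'m) layer" where
  "pad_right zs L = (lleft L, lbox L, lright L @ zs)"
definition pad_left :: "'o list \<Rightarrow> ('o,'m) layer \<Rightarrow> ('o,'m) layer" where
  "pad_left zs L = (zs @ lleft L, lbox L, lright L)"
definition dtns :: "('o,'m) diagram \<Rightarrow> ('o,'m) diagram \<Rightarrow> ('o,'m) diagram" (infixr "\<oplus>" 65) where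
  "f \<oplus> g = (map (pad_right (dtgt g)) (dlayers f) @ map (pad_left (dsrc f)) (dlayers g),
             dsrc f @ dsrc g, dtgt f @ dtgt g)"
definition did :: "'o list \<Rightarrow> ('o,'m) diagram" where
  "did xs = ([], xs, xs)"
definition dbox :: "('o,'m) tarr \<Rightarrow> ('o,'m) diagram" where
  "dbox G = ([([], G, [])], src G, tgt G)"

abbreviation dnil :: "('o,'m) diagram" where "dnil \<equiv> did []"

lemma dbounds_simps:
  "dsrc (g \<diamond> f) = dsrc f" "dtgt (g \<diamond> f) = dtgt g"
  "dsrc (f \<oplus> g) = dsrc f @ dsrc g" "dtgt (f \<oplus> g) = dtgt f @ dtgt g"
  "dsrc (did xs) = xs" "dtgt (did xs) = xs"
  "dsrc (dbox G) = src G" "dtgt (dbox G) = tgt G"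
  by (simp_all add: dcmp_def dtns_def did_def dbox_def)

lemma wfd_darr_dcmp:
  "wfd f \<Longrightarrow> wfd g \<Longrightarrow> dsrc g = dtgt f \<Longrightarrow> wfd (g \<diamond> f) \<and> darr (g \<diamond> f) = darr g \<cdot> darr f"
  unfolding wfd_def darr_def dcmp_def using chain_append by auto

lemma chain_pad_right:
  assumes "chain Lf sf tf" "set zs \<subseteq> Ob" "set sf \<subseteq> Ob"
  shows "chain (map (pad_right zs) Lf) (sf @ zs) (tf @ zs) \<and>
    chain_arr (map (pad_right zs) Lf) (sf @ zs) = chain_arr Lf sf \<star> tid zs"
  using assms
proof (induct Lf arbitrary: tf)
  case Nil
  then show ?case
    by (simp add: tid_tns_tid)
next
  case (Cons L Lf)
  have Lf_typed: "typed (chain_arr Lf sf)" "tgt (chain_arr Lf sf) = layer_src L"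
    using chain_arr_typed[of Lf sf "layer_src L"] Cons by auto
  have L_typed: "typed (layer_arr L)" "src (layer_arr L) = layer_src L"
    using layer_arr_typed[of L] Cons by auto
  have "layer_arr (pad_right zs L) = layer_arr L \<star> tid zs"
    using Cons by (simp add: layer_arr_def pad_right_def layer_typed_def whisk_tns_tid)
  moreover have "(layer_arr L \<star> tid zs) \<cdot> (chain_arr Lf sf \<star> tid zs) = (layer_arr L \<cdot> chain_arr Lf sf) \<star> tid zs"
    using Lf_typed L_typed Cons by (subst tns_interchange) (simp_all add: tid_cmp)
  moreover have "chain (map (pad_right zs) Lf) (sf @ zs) (layer_src L @ zs)"
    and "chain_arr (map (pad_right zs) Lf) (sf @ zs) = chain_arr Lf sf \<star> tid zs"
    using Cons(1)[of "layer_src L"] Cons(2-4) by auto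
  moreover have "layer_typed (pad_right zs L)" "layer_tgt (pad_right zs L) = tf @ zs"
    and "layer_src (pad_right zs L) = layer_src L @ zs"
    using Cons by (auto simp add: layer_typed_def pad_right_def layer_src_def layer_tgt_def)
  ultimately show ?case
    by simp
qed

lemma chain_pad_left:
  assumes "chain Lf sf tf" "set zs \<subseteq> Ob" "set sf \<subseteq> Ob"
  shows "chain (map (pad_left zs) Lf) (zs @ sf) (zs @ tf) \<and>
    chain_arr (map (pad_left zs) Lf) (zs @ sf) = tid zs \<star> chain_arr Lf sf"
  using assms
proof (induct Lf arbitrary: tf)
  case Nil
  then show ?case
    by (simp add: tid_tns_tid)
next
  case (Cons L Lf)
  have Lf_typed: "typed (chain_arr Lf sf)" "tgt (chain_arr Lf sf) = layer_src L"
    using chain_arr_typed[of Lf sf "layer_src L"] Cons by auto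
  have L_typed: "typed (layer_arr L)" "src (layer_arr L) = layer_src L"
    using layer_arr_typed[of L] Cons by auto
  have "layer_arr (pad_left zs L) = tid zs \<star> layer_arr L"
    using Cons by (simp add: layer_arr_def pad_left_def layer_typed_def tid_tns_whisk)
  moreover have "(tid zs \<star> layer_arr L) \<cdot> (tid zs \<star> chain_arr Lf sf) = tid zs \<star> (layer_arr L \<cdot> chain_arr Lf sf)"
    using Lf_typed L_typed Cons by (subst tns_interchange) (simp_all add: tid_cmp)
  moreover have "chain (map (pad_left zs) Lf) (zs @ sf) (zs @ layer_src L)"
    and "chain_arr (map (pad_left zs) Lf) (zs @ sf) = tid zs \<star> chain_arr Lf sf"
    using Cons(1)[of "layer_src L"] Cons(2-4) by auto
  moreover have "layer_typed (pad_left zs L)" "layer_tgt (pad_left zs L) = zs @ tf"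
    and "layer_src (pad_left zs L) = zs @ layer_src L"
    using Cons by (auto simp add: layer_typed_def pad_left_def layer_src_def layer_tgt_def)
  ultimately show ?case
    by simp
qed

lemma wfd_darr_dtns: "wfd f \<Longrightarrow> wfd g \<Longrightarrow> wfd (f \<oplus> g) \<and> darr (f \<oplus> g) = darr f \<star> darr g"
proof -
  assume "wfd f" "wfd g"
  obtain Lf sf tf where f: "f = (Lf, sf, tf)" "chain Lf sf tf" "set sf \<subseteq> Ob" "set tf \<subseteq> Ob"
    using \<open>wfd f\<close> by (cases f) (auto simp: wfd_def)
  obtain Lg sg tg where g: "g = (Lg, sg, tg)" "chain Lg sg tg" "set sg \<subseteq> Ob" "set tg \<subseteq> Ob"
    using \<open>wfd g\<close> by (cases g) (auto simp: wfd_def)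
  note right = chain_pad_right[OF f(2) g(4) f(3)] and left = chain_pad_left[OF g(2) f(3) g(3)]
  have "chain (map (pad_right tg) Lf @ map (pad_left sf) Lg) (sf @ sg) (tf @ tg) \<and>
    chain_arr (map (pad_right tg) Lf @ map (pad_left sf) Lg) (sf @ sg) =
      chain_arr (map (pad_right tg) Lf) (sf @ tg) \<cdot> chain_arr (map (pad_left sf) Lg) (sf @ sg)"
    using chain_append[of "map (pad_right tg) Lf" "sf @ tg" "tf @ tg" "map (pad_left sf) Lg" "sf @ sg"]
      right left f g by simp
  moreover have "(chain_arr Lf sf \<star> tid tg) \<cdot> (tid sf \<star> chain_arr Lg sg) = chain_arr Lf sf \<star> chain_arr Lg sg"
    using chain_arr_typed[OF f(2,3)] chain_arr_typed[OF g(2,3)] f g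
    by (subst tns_interchange) (simp_all add: tid_cmp cmp_tid)
  ultimately show ?thesis
    using right left f g by (simp add: wfd_def darr_def dtns_def)
qed

lemma darr_dcmp: "wfd f \<Longrightarrow> wfd g \<Longrightarrow> dsrc g = dtgt f \<Longrightarrow> darr (g \<diamond> f) = darr g \<cdot> darr f"
  and wfd_dcmp: "wfd f \<Longrightarrow> wfd g \<Longrightarrow> dsrc g = dtgt f \<Longrightarrow> wfd (g \<diamond> f)"
  and darr_dtns: "wfd f \<Longrightarrow> wfd g \<Longrightarrow> darr (f \<oplus> g) = darr f \<star> darr g"
  and wfd_dtns: "wfd f \<Longrightarrow> wfd g \<Longrightarrow> wfd (f \<oplus> g)"
  by (simp_all add: wfd_darr_dcmp wfd_darr_dtns)

lemma darr_did: "darr (did xs) = tid xs" and wfd_did: "set xs \<subseteq> Ob \<Longrightarrow> wfd (did xs)"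
  by (simp_all add: darr_def did_def wfd_def)

lemma darr_dbox: "typed G \<Longrightarrow> darr (dbox G) = G" and wfd_dbox: "typed G \<Longrightarrow> wfd (dbox G)"
  using typedD[of G]
  by (simp_all add: darr_def dbox_def wfd_def layer_arr_def whisk_Nil_Nil cmp_tid layer_typed_def
      layer_src_def layer_tgt_def)

lemmas darr_simps = darr_dcmp darr_dtns darr_did darr_dbox wfd_dcmp wfd_dtns wfd_did wfd_dbox dbounds_simps

fun dbraid_obj_word :: "'o \<Rightarrow> 'o list \<Rightarrow> ('o,'m) diagram" where
  "dbraid_obj_word x [] = did [x]"
| "dbraid_obj_word x (y # ys) = (did [y] \<oplus> dbraid_obj_word x ys) \<diamond> (dbox (tbr x y) \<oplus> did ys)"

fun dbraid_words :: "'o list \<Rightarrow> 'o list \<Rightarrow> ('o,'m) diagram" where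
  "dbraid_words [] ys = did ys"
| "dbraid_words (x # xs) ys = (dbraid_obj_word x ys \<oplus> did xs) \<diamond> (did [x] \<oplus> dbraid_words xs ys)"

lemma dbraid_obj_word_sound:
  "x \<in> Ob \<Longrightarrow> set ys \<subseteq> Ob \<Longrightarrow> wfd (dbraid_obj_word x ys) \<and> darr (dbraid_obj_word x ys) = braid_obj_word x ys \<and>
     dsrc (dbraid_obj_word x ys) = x # ys \<and> dtgt (dbraid_obj_word x ys) = ys @ [x]"
  by (induct ys) (simp_all add: darr_simps)

lemma dbraid_words_sound:
  "set xs \<subseteq> Ob \<Longrightarrow> set ys \<subseteq> Ob \<Longrightarrow> wfd (dbraid_words xs ys) \<and> darr (dbraid_words xs ys) = braid_words xs ys \<and>
     dsrc (dbraid_words xs ys) = xs @ ys \<and> dtgt (dbraid_words xs ys) = ys @ xs"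
  by (induct xs) (simp_all add: darr_simps dbraid_obj_word_sound)

text \<open>
  \<open>slides a b\<close>: the box of the upper layer \<open>a\<close> lies to the left of the box of the lower layer \<open>b\<close>,
  so by the interchange law \<open>a\<close> may be moved below \<open>b\<close>. The second conjunct only prevents two boxes
  without wires between them from being exchanged back and forth.
\<close>

definition slides :: "('o,'m) layer \<Rightarrow> ('o,'m) layer \<Rightarrow> bool" where
  "slides a b \<longleftrightarrow> length (lleft a) + length (src (lbox a)) \<le> length (lleft b) \<and>
      \<not> (length (lleft b) + length (tgt (lbox b)) \<le> length (lleft a))"

definition slide_upper :: "('o,'m) layer \<Rightarrow> ('o,'m) layer \<Rightarrow> ('o,'m) layer" where
  "slide_upper a b =
     (lleft a @ tgt (lbox a) @ drop (length (lleft a) + length (src (lbox a))) (lleft b), lbox b, lright b)"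
definition slide_lower :: "('o,'m) layer \<Rightarrow> ('o,'m) layer \<Rightarrow> ('o,'m) layer" where
  "slide_lower a b =
     (lleft a, lbox a, drop (length (lleft a) + length (src (lbox a))) (lleft b) @ src (lbox b) @ lright b)"

fun slide_pass :: "('o,'m) layer list \<Rightarrow> ('o,'m) layer list" where
  "slide_pass (a # b # R) =
     (if slides a b then slide_upper a b # slide_pass (slide_lower a b # R) else a # slide_pass (b # R))"
| "slide_pass Ls = Ls"

fun can_slide :: "('o,'m) layer list \<Rightarrow> bool" where
  "can_slide (a # b # R) = (slides a b \<or> can_slide (b # R))"
| "can_slide Ls = False"

fun slide_iter :: "nat \<Rightarrow> ('o,'m) layer list \<Rightarrow> ('o,'m) layer list" where
  "slide_iter 0 Ls = Ls"
| "slide_iter (Suc n) Ls = (if can_slide Ls then slide_iter n (slide_pass Ls) else Ls)"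

lemma slide_iter_numeral:
  "slide_iter (numeral k) Ls = (if can_slide Ls then slide_iter (pred_numeral k) (slide_pass Ls) else Ls)"
  by (simp add: numeral_eq_Suc)

text \<open>
  The fuel of \<open>normalize\<close> only has to make the normal forms of the diagrams compared below
  coincide; soundness does not depend on it.
\<close>

definition normalize :: "('o,'m) diagram \<Rightarrow> ('o,'m) diagram" where
  "normalize D = (slide_iter (length (dlayers D) * length (dlayers D) + 1) (dlayers D), snd D)"

lemma slide_step:
  assumes chain: "chain (a # b # R) s t" and slides: "slides a b"
  shows "chain (slide_upper a b # slide_lower a b # R) s t"
    and "layer_arr a \<cdot> layer_arr b = layer_arr (slide_upper a b) \<cdot> layer_arr (slide_lower a b)"
    and "layer_src (slide_lower a b) = layer_src b"
proof -
  obtain xs G ys where a: "a = (xs, G, ys)"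
    by (cases a) auto
  obtain xs' H ys' where b: "b = (xs', H, ys')"
    by (cases b) auto
  define zs where "zs = drop (length xs + length (src G)) xs'"
  have links: "layer_typed a" "layer_tgt a = t" "layer_typed b" "layer_tgt b = layer_src a" "chain R s (layer_src b)"
    using chain by auto
  have eq: "xs @ src G @ ys = xs' @ tgt H @ ys'"
    using links(4) a b by (simp add: layer_src_def layer_tgt_def)
  have le: "length xs + length (src G) \<le> length xs'"
    using slides a b by (simp add: slides_def)
  have xs': "xs' = xs @ src G @ zs"
    using append_split[OF eq le] zs_def by simp
  have ys: "ys = zs @ tgt H @ ys'"
    using eq xs' by simp
  have typed: "typed G" "typed H" "set xs \<subseteq> Ob" "set ys \<subseteq> Ob" "set xs' \<subseteq> Ob" "set ys' \<subseteq> Ob"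
    using links a b by (auto simp: layer_typed_def)
  have "set zs \<subseteq> Ob"
    using typed(5) xs' by auto
  have upper: "slide_upper a b = (xs @ tgt G @ zs, H, ys')"
    using a b zs_def by (simp add: slide_upper_def)
  have lower: "slide_lower a b = (xs, G, zs @ src H @ ys')"
    using a b zs_def by (simp add: slide_lower_def)
  have "layer_typed (slide_upper a b)" "layer_typed (slide_lower a b)"
    using typed \<open>set zs \<subseteq> Ob\<close> typedD[of G] typedD[of H] by (simp_all add: upper lower layer_typed_def)
  moreover have "layer_tgt (slide_upper a b) = t" "layer_src (slide_upper a b) = layer_tgt (slide_lower a b)"
    unfolding upper lower using links(2) a ys by (simp_all add: layer_src_def layer_tgt_def)
  moreover show "layer_src (slide_lower a b) = layer_src b"
    unfolding lower using b xs' by (simp add: layer_src_def)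
  ultimately show "chain (slide_upper a b # slide_lower a b # R) s t"
    using links(5) by simp
  show "layer_arr a \<cdot> layer_arr b = layer_arr (slide_upper a b) \<cdot> layer_arr (slide_lower a b)"
    unfolding a b layer_arr_def using whisk_slide[OF typed eq le] zs_def
    by (simp add: slide_upper_def slide_lower_def)
qed

lemma slide_pass_sound:
  "chain Ls s t \<Longrightarrow> set s \<subseteq> Ob \<Longrightarrow> chain (slide_pass Ls) s t \<and> chain_arr (slide_pass Ls) s = chain_arr Ls s"
proof (induct Ls arbitrary: t rule: slide_pass.induct)
  case (1 a b R)
  show ?case
  proof (cases "slides a b")
    case True
    note step = slide_step[OF 1(3) True]
    have "chain (slide_lower a b # R) s (layer_src (slide_upper a b))"
      using step(1) by simp
    then have IH: "chain (slide_pass (slide_lower a b # R)) s (layer_src (slide_upper a b))"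
      "chain_arr (slide_pass (slide_lower a b # R)) s = chain_arr (slide_lower a b # R) s"
      using 1(1)[OF True _ 1(4)] by blast+
    have R_typed: "typed (chain_arr R s)" "tgt (chain_arr R s) = layer_src b"
      using chain_arr_typed[of R s "layer_src b"] 1 by auto
    have ab: "layer_typed a" "layer_typed b" "layer_tgt b = layer_src a"
      using 1(3) by auto
    have slid: "layer_typed (slide_upper a b)" "layer_typed (slide_lower a b)"
      "layer_src (slide_upper a b) = layer_tgt (slide_lower a b)"
      using step(1) by auto
    have "chain_arr (slide_pass (a # b # R)) s =
        layer_arr (slide_upper a b) \<cdot> (layer_arr (slide_lower a b) \<cdot> chain_arr R s)"
      using True IH by simp
    also have "\<dots> = (layer_arr (slide_upper a b) \<cdot> layer_arr (slide_lower a b)) \<cdot> chain_arr R s"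
      using layer_arr_typed[OF slid(1)] layer_arr_typed[OF slid(2)] slid step(3) R_typed
      by (simp add: cmp_assoc)
    also have "\<dots> = (layer_arr a \<cdot> layer_arr b) \<cdot> chain_arr R s"
      using step(2) by simp
    also have "\<dots> = chain_arr (a # b # R) s"
      using layer_arr_typed[OF ab(1)] layer_arr_typed[OF ab(2)] ab R_typed by (simp add: cmp_assoc)
    finally show ?thesis
      using True IH step(1) by simp
  next
    case False
    have "chain (b # R) s (layer_src a)"
      using 1(3) by simp
    then show ?thesis
      using False 1(2)[OF False _ 1(4)] 1(3) by simp
  qed
qed simp_all

lemma slide_iter_sound:
  "chain Ls s t \<Longrightarrow> set s \<subseteq> Ob \<Longrightarrow> chain (slide_iter n Ls) s t \<and> chain_arr (slide_iter n Ls) s = chain_arr Ls s"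
  by (induct n arbitrary: Ls) (use slide_pass_sound in auto)

lemma normalize_sound: "wfd D \<Longrightarrow> wfd (normalize D) \<and> darr (normalize D) = darr D"
  unfolding wfd_def darr_def normalize_def using slide_iter_sound by (metis prod.collapse fst_conv snd_conv)

lemma darr_eq_if_normalize_eq: "wfd D1 \<Longrightarrow> wfd D2 \<Longrightarrow> normalize D1 = normalize D2 \<Longrightarrow> darr D1 = darr D2"
  using normalize_sound by metis

definition deq :: "('o,'m) diagram \<Rightarrow> ('o,'m) diagram \<Rightarrow> bool" where
  "deq A B \<longleftrightarrow> darr A = darr B \<and> wfd A \<and> wfd B"

lemma deq_sym: "deq A B \<Longrightarrow> deq B A"
  by (auto simp: deq_def)

lemma deq_normalize:
  "deq A B \<Longrightarrow> wfd A' \<Longrightarrow> wfd B' \<Longrightarrow> normalize A = normalize A' \<Longrightarrow> normalize B = normalize B' \<Longrightarrow> deq A' B'"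
  unfolding deq_def using darr_eq_if_normalize_eq by metis

lemma deq_rewrite:
  assumes AB: "deq A B" and "wfd X" "wfd Y" "set xs \<subseteq> Ob" "set ys \<subseteq> Ob"
    and "dsrc X = xs @ dtgt A @ ys" "dtgt Y = xs @ dsrc A @ ys"
    and "wfd P" and P: "normalize P = normalize (X \<diamond> (did xs \<oplus> A \<oplus> did ys) \<diamond> Y)"
  shows "darr P = darr (X \<diamond> (did xs \<oplus> B \<oplus> did ys) \<diamond> Y)"
proof -
  have "darr A = darr B" "wfd A" "wfd B"
    using AB by (auto simp: deq_def)
  moreover have "dsrc A = dsrc B" "dtgt A = dtgt B"
    using darr_typed[OF \<open>wfd A\<close>] darr_typed[OF \<open>wfd B\<close>] \<open>darr A = darr B\<close> by metis+
  ultimately have "wfd (X \<diamond> (did xs \<oplus> A \<oplus> did ys) \<diamond> Y)"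
    and "darr (X \<diamond> (did xs \<oplus> A \<oplus> did ys) \<diamond> Y) = darr (X \<diamond> (did xs \<oplus> B \<oplus> did ys) \<diamond> Y)"
    using assms by (simp_all add: darr_simps)
  then show ?thesis
    using darr_eq_if_normalize_eq[OF \<open>wfd P\<close> _ P] by simp
qed

lemma deq_braid_natural:
  assumes "wfd F" "wfd G"
  shows "deq (dbraid_words (dtgt F) (dtgt G) \<diamond> (F \<oplus> G)) ((G \<oplus> F) \<diamond> dbraid_words (dsrc F) (dsrc G))"
proof -
  have "set (dtgt F) \<subseteq> Ob" "set (dtgt G) \<subseteq> Ob" "set (dsrc F) \<subseteq> Ob" "set (dsrc G) \<subseteq> Ob"
    using assms by (auto simp: wfd_def)
  then show ?thesis
    unfolding deq_def
    using braid_words_natural[of "darr F" "darr G"] darr_typed[OF assms(1)] darr_typed[OF assms(2)]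
      dbraid_words_sound[of "dtgt F" "dtgt G"] dbraid_words_sound[of "dsrc F" "dsrc G"] assms
    by (simp add: darr_simps)
qed

lemmas normalize_simps = dcmp_def dtns_def did_def dbox_def pad_right_def pad_left_def wfd_def layer_typed_def
  layer_src_def layer_tgt_def normalize_def slide_iter_numeral slide_pass.simps can_slide.simps slides_def
  slide_upper_def slide_lower_def dbraid_obj_word.simps dbraid_words.simps

end

section \<open>Weak bialgebras and weak Hopf algebras\<close>

locale wbialg = braided_cat C for C :: "('o,'m) bmcat" +
  fixes X :: 'o and \<eta> \<mu> \<epsilon> \<delta> :: 'm
  assumes is_weak_bialgebra: "weak_bialgebra C X \<eta> \<mu> \<epsilon> \<delta>"
begin

abbreviation "I \<equiv> did [X]"
abbreviation "I2 \<equiv> did [X,X]"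
abbreviation "I3 \<equiv> did [X,X,X]"
abbreviation "I4 \<equiv> did [X,X,X,X]"
abbreviation "u \<equiv> dbox (\<eta>, [], [X])"
abbreviation "m \<equiv> dbox (\<mu>, [X,X], [X])"
abbreviation "e \<equiv> dbox (\<epsilon>, [X], [])"
abbreviation "d \<equiv> dbox (\<delta>, [X], [X,X])"
abbreviation "cc \<equiv> dbox (tbr X X)"
abbreviation "cci \<equiv> dbox (tbri X X)"
abbreviation "em \<equiv> e \<diamond> m"
abbreviation "du \<equiv> d \<diamond> u"

lemma X_Ob [simp]: "X \<in> Ob"
  using is_weak_bialgebra by (simp add: weak_bialgebra_def is_algebra_def)

lemma typed_structure [simp]:
  "typed (\<eta>, [], [X])" "typed (\<mu>, [X,X], [X])" "typed (\<epsilon>, [X], [])" "typed (\<delta>, [X], [X,X])"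
  using is_weak_bialgebra
  by (auto simp add: weak_bialgebra_def is_algebra_def is_coalgebra_def typed_def hom_iff wobj_Cons)

lemmas weak_bialgebra_unfolded = is_weak_bialgebra[unfolded weak_bialgebra_def is_algebra_def is_coalgebra_def]

lemma mult_assoc: "deq (m \<diamond> (m \<oplus> I)) (m \<diamond> (I \<oplus> m))"
  and mult_unit_left: "deq (m \<diamond> (u \<oplus> I)) I"
  and comult_coassoc: "deq ((d \<oplus> I) \<diamond> d) ((I \<oplus> d) \<diamond> d)"
  and counit_left: "deq ((e \<oplus> I) \<diamond> d) I" and counit_right: "deq ((I \<oplus> e) \<diamond> d) I"
  and comult_mult: "deq (d \<diamond> m) ((m \<oplus> m) \<diamond> ((I \<oplus> cc) \<oplus> I) \<diamond> (d \<oplus> d))"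
  and counit_mult_mult: "deq (e \<diamond> (m \<diamond> (m \<oplus> I))) (((e \<diamond> m) \<oplus> (e \<diamond> m)) \<diamond> ((I \<oplus> d) \<oplus> I))"
  and counit_mult_mult_braid_inv: "deq (e \<diamond> (m \<diamond> (m \<oplus> I))) (((e \<diamond> m) \<oplus> (e \<diamond> m)) \<diamond> ((I \<oplus> (cci \<diamond> d)) \<oplus> I))"
  unfolding deq_def
  by (simp add: darr_simps; rule tarr_eqI;
      simp only: tarr_simps tbr_simps wobj_single[OF X_Ob] fst_conv snd_conv append.simps;
      use weak_bialgebra_unfolded in blast)+

lemma braid_braid_inv: "deq (cc \<diamond> cci) I2"
  unfolding deq_def by (simp add: darr_simps, rule tarr_eqI, simp_all add: br_inv wobj_Cons)

lemma braid_natural_mult: "deq (cc \<diamond> (I \<oplus> m)) ((m \<oplus> I) \<diamond> (I \<oplus> cc) \<diamond> (cc \<oplus> I))"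
  by (rule deq_normalize[OF deq_braid_natural[of I m]]) (simp_all add: normalize_simps)
lemma braid_natural_comult_left: "deq ((d \<oplus> I) \<diamond> cc) ((I \<oplus> cc) \<diamond> (cc \<oplus> I) \<diamond> (I \<oplus> d))"
  by (rule deq_normalize[OF deq_sym[OF deq_braid_natural[of I d]]]) (simp_all add: normalize_simps)
lemma braid_natural_comult_right: "deq ((I \<oplus> d) \<diamond> cc) ((cc \<oplus> I) \<diamond> (I \<oplus> cc) \<diamond> (d \<oplus> I))"
  by (rule deq_normalize[OF deq_sym[OF deq_braid_natural[of d I]]]) (simp_all add: normalize_simps)
lemma braid_natural_em_left: "deq ((em \<oplus> I) \<diamond> (I \<oplus> cc) \<diamond> (cc \<oplus> I)) (I \<oplus> em)"
  by (rule deq_normalize[OF deq_sym[OF deq_braid_natural[of I em]]]) (simp_all add: normalize_simps)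
lemma braid_natural_em_right: "deq ((I \<oplus> em) \<diamond> (cc \<oplus> I) \<diamond> (I \<oplus> cc)) (em \<oplus> I)"
  by (rule deq_normalize[OF deq_sym[OF deq_braid_natural[of em I]]]) (simp_all add: normalize_simps)
lemma braid_natural_braid_inv: "deq ((I \<oplus> cci) \<diamond> (cc \<oplus> I) \<diamond> (I \<oplus> cc)) ((cc \<oplus> I) \<diamond> (I \<oplus> cc) \<diamond> (cci \<oplus> I))"
  by (rule deq_normalize[OF deq_sym[OF deq_braid_natural[of cci I]]]) (simp_all add: normalize_simps)
lemma braid_natural_counit: "deq ((I \<oplus> e) \<diamond> cc) (e \<oplus> I)"
  by (rule deq_normalize[OF deq_sym[OF deq_braid_natural[of e I]]]) (simp_all add: normalize_simps)

end

locale whopf = wbialg C X \<eta> \<mu> \<epsilon> \<delta> for C :: "('o,'m) bmcat" and X \<eta> \<mu> \<epsilon> \<delta> +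
  fixes lam :: 'm
  assumes is_weak_hopf: "weak_hopf_algebra C X \<eta> \<mu> \<epsilon> \<delta> lam"
begin

abbreviation "S \<equiv> dbox (lam, [X], [X])"
abbreviation "PL_unfolded \<equiv> (em \<oplus> I) \<diamond> (I \<oplus> cc) \<diamond> (du \<oplus> I)"
abbreviation "PR_unfolded \<equiv> (I \<oplus> em) \<diamond> (cc \<oplus> I) \<diamond> (I \<oplus> du)"
abbreviation "PL \<equiv> dbox (PiL C X \<eta> \<mu> \<epsilon> \<delta>, [X], [X])"
abbreviation "PR \<equiv> dbox (PiR C X \<eta> \<mu> \<epsilon> \<delta>, [X], [X])"
abbreviation cnv where "cnv h k \<equiv> m \<diamond> (h \<oplus> k) \<diamond> d"

lemma typed_antipode [simp]: "typed (lam, [X], [X])"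
  using is_weak_hopf by (simp add: weak_hopf_algebra_def hom_iff typed_def)

lemma darr_PL_unfolded: "darr PL_unfolded = (PiL C X \<eta> \<mu> \<epsilon> \<delta>, [X], [X])"
  and wfd_PL_unfolded: "wfd PL_unfolded"
  by (simp_all add: darr_simps, rule tarr_eqI, simp_all add: PiL_def)
lemma darr_PR_unfolded: "darr PR_unfolded = (PiR C X \<eta> \<mu> \<epsilon> \<delta>, [X], [X])"
  and wfd_PR_unfolded: "wfd PR_unfolded"
  by (simp_all add: darr_simps, rule tarr_eqI, simp_all add: PiR_def)

lemma typed_PiL [simp]: "typed (PiL C X \<eta> \<mu> \<epsilon> \<delta>, [X], [X])"
  using darr_typed[OF wfd_PL_unfolded] darr_PL_unfolded by simp
lemma typed_PiR [simp]: "typed (PiR C X \<eta> \<mu> \<epsilon> \<delta>, [X], [X])"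
  using darr_typed[OF wfd_PR_unfolded] darr_PR_unfolded by simp

lemma PL_unfold: "deq PL PL_unfolded" and PR_unfold: "deq PR PR_unfolded"
  unfolding deq_def using darr_PL_unfolded wfd_PL_unfolded darr_PR_unfolded wfd_PR_unfolded
  by (simp_all add: darr_simps)

lemmas weak_hopf_unfolded = is_weak_hopf[unfolded weak_hopf_algebra_def conv_def]

lemma cnv_id_antipode: "deq (cnv I S) PL" and cnv_antipode_id: "deq (cnv S I) PR"
  unfolding deq_def by (simp_all add: darr_simps; rule tarr_eqI; use weak_hopf_unfolded in simp)+

lemma cnv_PR_antipode: "deq (cnv PR S) S"
proof -
  have PR_conv_antipode: "\<mu> \<bullet> (PiR C X \<eta> \<mu> \<epsilon> \<delta> \<otimes> lam) \<bullet> \<delta> = lam"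
    using weak_hopf_unfolded by metis
  show ?thesis
    unfolding deq_def by (simp add: darr_simps, rule tarr_eqI, simp_all add: PR_conv_antipode)
qed

lemma PL_mult: "deq (PL \<diamond> m) ((PL \<oplus> em) \<diamond> (d \<oplus> I))"
proof -
  have "darr (PL \<diamond> m) = darr (I \<diamond> (dnil \<oplus> PL_unfolded \<oplus> dnil) \<diamond> m)"
    by (rule deq_rewrite[OF PL_unfold]) (simp_all add: normalize_simps)
  also have "\<dots> = darr ((em \<oplus> I) \<diamond> (I \<oplus> ((m \<oplus> I) \<diamond> (I \<oplus> cc) \<diamond> (cc \<oplus> I)) \<oplus> dnil) \<diamond> (du \<oplus> I2))"
    by (rule deq_rewrite[OF braid_natural_mult]) (simp_all add: normalize_simps)
  also have "\<dots> = darr ((e \<oplus> I) \<diamond> (dnil \<oplus> (m \<diamond> (m \<oplus> I)) \<oplus> I) \<diamond> (I \<oplus> ((I \<oplus> cc) \<diamond> (cc \<oplus> I))) \<diamond> (du \<oplus> I2))"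
    by (rule deq_rewrite[OF deq_sym[OF mult_assoc]]) (simp_all add: normalize_simps)
  also have "\<dots> = darr (I \<diamond> (dnil \<oplus> (((e \<diamond> m) \<oplus> (e \<diamond> m)) \<diamond> ((I \<oplus> d) \<oplus> I)) \<oplus> I) \<diamond> (I \<oplus> ((I \<oplus> cc) \<diamond> (cc \<oplus> I))) \<diamond> (du \<oplus> I2))"
    by (rule deq_rewrite[OF counit_mult_mult]) (simp_all add: normalize_simps)
  also have "\<dots> = darr (((em \<oplus> em \<oplus> I) \<diamond> (I3 \<oplus> cc)) \<diamond> (I \<oplus> ((I \<oplus> cc) \<diamond> (cc \<oplus> I) \<diamond> (I \<oplus> d)) \<oplus> I) \<diamond> (du \<oplus> I2))"
    by (rule deq_rewrite[OF braid_natural_comult_left]) (simp_all add: normalize_simps)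
  also have "\<dots> = darr ((em \<oplus> I) \<diamond> (I2 \<oplus> (I \<oplus> em) \<oplus> dnil) \<diamond> (I \<oplus> cc \<oplus> I2) \<diamond> (I2 \<oplus> d \<oplus> I) \<diamond> (du \<oplus> I2))"
    by (rule deq_rewrite[OF braid_natural_em_left]) (simp_all add: normalize_simps)
  also have "\<dots> = darr ((I \<oplus> em) \<diamond> (dnil \<oplus> PL \<oplus> I2) \<diamond> (d \<oplus> I))"
    by (rule deq_rewrite[OF deq_sym[OF PL_unfold]]) (simp_all add: normalize_simps)
  also have "\<dots> = darr ((PL \<oplus> em) \<diamond> (d \<oplus> I))"
    by (rule darr_eq_if_normalize_eq) (simp_all add: normalize_simps)
  finally show ?thesis unfolding deq_def by (simp add: normalize_simps)
qed

lemma em_braid: "deq ((I \<oplus> em) \<diamond> (cc \<oplus> I)) ((em \<oplus> I) \<diamond> (I \<oplus> cci))"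
proof -
  have "darr ((em \<oplus> I) \<diamond> (I \<oplus> cci)) = darr (I \<diamond> (dnil \<oplus> ((I \<oplus> em) \<diamond> (cc \<oplus> I) \<diamond> (I \<oplus> cc)) \<oplus> dnil) \<diamond> (I \<oplus> cci))"
    by (rule deq_rewrite[OF deq_sym[OF braid_natural_em_right]]) (simp_all add: normalize_simps)
  also have "\<dots> = darr (((I \<oplus> em) \<diamond> (cc \<oplus> I)) \<diamond> (I \<oplus> I2 \<oplus> dnil) \<diamond> I3)"
    by (rule deq_rewrite[OF braid_braid_inv]) (simp_all add: normalize_simps)
  also have "\<dots> = darr ((I \<oplus> em) \<diamond> (cc \<oplus> I))"
    by (rule darr_eq_if_normalize_eq) (simp_all add: normalize_simps)
  finally show ?thesis unfolding deq_def by (simp add: normalize_simps)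
qed

lemma mult_PR_expand: "darr (m \<diamond> (PR \<oplus> I)) = darr (((I \<oplus> e) \<diamond> (m \<oplus> m) \<diamond> (I \<oplus> cc \<oplus> I) \<diamond> (I2 \<oplus> d)) \<diamond>
    (I \<oplus> ((em \<oplus> I) \<diamond> (I \<oplus> cci)) \<oplus> I) \<diamond> (cc \<oplus> I3) \<diamond> (I \<oplus> d \<oplus> I2) \<diamond> (I \<oplus> du \<oplus> I))"
proof -
  have "darr (m \<diamond> (PR \<oplus> I)) = darr (m \<diamond> (dnil \<oplus> PR_unfolded \<oplus> I) \<diamond> I2)"
    by (rule deq_rewrite[OF PR_unfold]) (simp_all add: normalize_simps)
  also have "\<dots> = darr (I \<diamond> (dnil \<oplus> ((I \<oplus> e) \<diamond> d) \<oplus> dnil) \<diamond> (m \<diamond> (PR_unfolded \<oplus> I)))"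
    by (rule deq_rewrite[OF deq_sym[OF counit_right]]) (simp_all add: normalize_simps)
  also have "\<dots> = darr ((I \<oplus> e) \<diamond> (dnil \<oplus> ((m \<oplus> m) \<diamond> ((I \<oplus> cc) \<oplus> I) \<diamond> (d \<oplus> d)) \<oplus> dnil) \<diamond> (PR_unfolded \<oplus> I))"
    by (rule deq_rewrite[OF comult_mult]) (simp_all add: normalize_simps)
  also have "\<dots> = darr (((I \<oplus> e) \<diamond> (m \<oplus> m) \<diamond> (I \<oplus> cc \<oplus> I) \<diamond> (I2 \<oplus> d) \<diamond> (I2 \<oplus> em \<oplus> I)) \<diamond>
      (dnil \<oplus> ((I \<oplus> cc) \<diamond> (cc \<oplus> I) \<diamond> (I \<oplus> d)) \<oplus> I2) \<diamond> (I \<oplus> du \<oplus> I))"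
    by (rule deq_rewrite[OF braid_natural_comult_left]) (simp_all add: normalize_simps)
  also have "\<dots> = darr (((I \<oplus> e) \<diamond> (m \<oplus> m) \<diamond> (I \<oplus> cc \<oplus> I) \<diamond> (I2 \<oplus> d)) \<diamond>
    (I \<oplus> ((em \<oplus> I) \<diamond> (I \<oplus> cci)) \<oplus> I) \<diamond> (cc \<oplus> I3) \<diamond> (I \<oplus> d \<oplus> I2) \<diamond> (I \<oplus> du \<oplus> I))"
    by (rule deq_rewrite[OF em_braid]) (simp_all add: normalize_simps)
  finally show ?thesis .
qed

lemma em_braid_comult_expand: "darr ((I \<oplus> em) \<diamond> (cc \<oplus> I) \<diamond> (I \<oplus> d)) = darr (((I \<oplus> em) \<diamond> (m \<oplus> I2)) \<diamond> (I \<oplus> (em \<oplus> I) \<oplus> I2) \<diamond>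
    (cc \<oplus> I4) \<diamond> (I3 \<oplus> cc \<oplus> I) \<diamond> (I2 \<oplus> cci \<oplus> I2) \<diamond> (I4 \<oplus> d) \<diamond> (I \<oplus> ((d \<oplus> I) \<diamond> d) \<oplus> I) \<diamond> (I \<oplus> u \<oplus> I))"
proof -
  have "darr ((I \<oplus> em) \<diamond> (cc \<oplus> I) \<diamond> (I \<oplus> d)) = darr (((I \<oplus> em) \<diamond> (cc \<oplus> I) \<diamond> (I \<oplus> d)) \<diamond> (I \<oplus> (m \<diamond> (u \<oplus> I)) \<oplus> dnil) \<diamond> I2)"
    by (rule deq_rewrite[OF deq_sym[OF mult_unit_left]]) (simp_all add: normalize_simps)
  also have "\<dots> = darr (((I \<oplus> em) \<diamond> (cc \<oplus> I)) \<diamond> (I \<oplus> ((m \<oplus> m) \<diamond> ((I \<oplus> cc) \<oplus> I) \<diamond> (d \<oplus> d)) \<oplus> dnil) \<diamond> (I \<oplus> u \<oplus> I))"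
    by (rule deq_rewrite[OF comult_mult]) (simp_all add: normalize_simps)
  also have "\<dots> = darr ((I \<oplus> em) \<diamond> (dnil \<oplus> ((m \<oplus> I) \<diamond> (I \<oplus> cc) \<diamond> (cc \<oplus> I)) \<oplus> I) \<diamond> (I3 \<oplus> m) \<diamond>
      (I \<oplus> ((I \<oplus> cc \<oplus> I) \<diamond> (d \<oplus> d))) \<diamond> (I \<oplus> u \<oplus> I))"
    by (rule deq_rewrite[OF braid_natural_mult]) (simp_all add: normalize_simps)
  also have "\<dots> = darr ((I \<oplus> e) \<diamond> (I \<oplus> (m \<diamond> (m \<oplus> I)) \<oplus> dnil) \<diamond> (m \<oplus> I3) \<diamond> (I \<oplus> cc \<oplus> I2) \<diamond> (cc \<oplus> I3) \<diamond>
      (I \<oplus> ((I \<oplus> cc \<oplus> I) \<diamond> (d \<oplus> d))) \<diamond> (I \<oplus> u \<oplus> I))"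
    by (rule deq_rewrite[OF deq_sym[OF mult_assoc]]) (simp_all add: normalize_simps)
  also have "\<dots> = darr (I \<diamond> (I \<oplus> (((e \<diamond> m) \<oplus> (e \<diamond> m)) \<diamond> ((I \<oplus> (cci \<diamond> d)) \<oplus> I)) \<oplus> dnil) \<diamond> (m \<oplus> I3) \<diamond> (I \<oplus> cc \<oplus> I2) \<diamond> (cc \<oplus> I3) \<diamond>
      (I \<oplus> ((I \<oplus> cc \<oplus> I) \<diamond> (d \<oplus> d))) \<diamond> (I \<oplus> u \<oplus> I))"
    by (rule deq_rewrite[OF counit_mult_mult_braid_inv]) (simp_all add: normalize_simps)
  also have "\<dots> = darr (((I \<oplus> em \<oplus> em) \<diamond> (I2 \<oplus> cci \<oplus> I) \<diamond> (m \<oplus> I4) \<diamond> (I \<oplus> cc \<oplus> I3) \<diamond> (cc \<oplus> I4)) \<diamond>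
      (I2 \<oplus> ((cc \<oplus> I) \<diamond> (I \<oplus> cc) \<diamond> (d \<oplus> I)) \<oplus> I) \<diamond> (I \<oplus> d \<oplus> d) \<diamond> (I \<oplus> u \<oplus> I))"
    by (rule deq_rewrite[OF braid_natural_comult_right]) (simp_all add: normalize_simps)
  also have "\<dots> = darr (((I \<oplus> em \<oplus> em) \<diamond> (I2 \<oplus> cci \<oplus> I) \<diamond> (m \<oplus> I4) \<diamond> (I \<oplus> cc \<oplus> I3) \<diamond> (cc \<oplus> I4) \<diamond>
      (I2 \<oplus> ((cc \<oplus> I) \<diamond> (I \<oplus> cc)) \<oplus> I) \<diamond> (I4 \<oplus> d)) \<diamond> (I \<oplus> ((d \<oplus> I) \<diamond> d) \<oplus> I) \<diamond> (I \<oplus> u \<oplus> I))"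
    by (rule deq_rewrite[OF deq_sym[OF comult_coassoc]]) (simp_all add: normalize_simps)
  also have "\<dots> = darr (((I \<oplus> em \<oplus> em) \<diamond> (m \<oplus> I4) \<diamond> (I \<oplus> cc \<oplus> I3) \<diamond> (cc \<oplus> I4)) \<diamond>
      (I2 \<oplus> ((cc \<oplus> I) \<diamond> (I \<oplus> cc) \<diamond> (cci \<oplus> I)) \<oplus> I) \<diamond> (I4 \<oplus> d) \<diamond> (I \<oplus> ((d \<oplus> I) \<diamond> d) \<oplus> I) \<diamond> (I \<oplus> u \<oplus> I))"
    by (rule deq_rewrite[OF braid_natural_braid_inv]) (simp_all add: normalize_simps)
  also have "\<dots> = darr (((I \<oplus> em) \<diamond> (m \<oplus> I2)) \<diamond> (I \<oplus> (em \<oplus> I) \<oplus> I2) \<diamond>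
    (cc \<oplus> I4) \<diamond> (I3 \<oplus> cc \<oplus> I) \<diamond> (I2 \<oplus> cci \<oplus> I2) \<diamond> (I4 \<oplus> d) \<diamond> (I \<oplus> ((d \<oplus> I) \<diamond> d) \<oplus> I) \<diamond> (I \<oplus> u \<oplus> I))"
    by (rule deq_rewrite[OF braid_natural_em_right]) (simp_all add: normalize_simps)
  finally show ?thesis .
qed

lemma mult_PR: "deq (m \<diamond> (PR \<oplus> I)) ((I \<oplus> em) \<diamond> (cc \<oplus> I) \<diamond> (I \<oplus> d))"
proof -
  have expansions_agree: "darr (((I \<oplus> e) \<diamond> (m \<oplus> m) \<diamond> (I \<oplus> cc \<oplus> I) \<diamond> (I2 \<oplus> d)) \<diamond>
      (I \<oplus> ((em \<oplus> I) \<diamond> (I \<oplus> cci)) \<oplus> I) \<diamond> (cc \<oplus> I3) \<diamond> (I \<oplus> d \<oplus> I2) \<diamond> (I \<oplus> du \<oplus> I)) =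
    darr (((I \<oplus> em) \<diamond> (m \<oplus> I2)) \<diamond> (I \<oplus> (em \<oplus> I) \<oplus> I2) \<diamond>
      (cc \<oplus> I4) \<diamond> (I3 \<oplus> cc \<oplus> I) \<diamond> (I2 \<oplus> cci \<oplus> I2) \<diamond> (I4 \<oplus> d) \<diamond> (I \<oplus> ((d \<oplus> I) \<diamond> d) \<oplus> I) \<diamond> (I \<oplus> u \<oplus> I))"
    by (rule darr_eq_if_normalize_eq) (simp_all add: normalize_simps)
  show ?thesis unfolding deq_def using mult_PR_expand em_braid_comult_expand expansions_agree by (simp add: normalize_simps)
qed

lemma counit_PL: "deq (e \<diamond> PL) e"
proof -
  have "darr (e \<diamond> PL) = darr (e \<diamond> (dnil \<oplus> PL_unfolded \<oplus> dnil) \<diamond> I)"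
    by (rule deq_rewrite[OF PL_unfold]) (simp_all add: normalize_simps)
  also have "\<dots> = darr (em \<diamond> (I \<oplus> (e \<oplus> I) \<oplus> dnil) \<diamond> (du \<oplus> I))"
    by (rule deq_rewrite[OF braid_natural_counit]) (simp_all add: normalize_simps)
  also have "\<dots> = darr (em \<diamond> (dnil \<oplus> I \<oplus> I) \<diamond> (u \<oplus> I))"
    by (rule deq_rewrite[OF counit_right]) (simp_all add: normalize_simps)
  also have "\<dots> = darr (e \<diamond> (dnil \<oplus> I \<oplus> dnil) \<diamond> I)"
    by (rule deq_rewrite[OF mult_unit_left]) (simp_all add: normalize_simps)
  also have "\<dots> = darr e"
    by (rule darr_eq_if_normalize_eq) (simp_all add: normalize_simps)
  finally show ?thesis unfolding deq_def by (simp add: normalize_simps)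
qed

lemma cnv_antipode_PL: "deq (cnv S PL) S"
proof -
  have "darr (cnv S PL) = darr ((m \<diamond> (S \<oplus> I)) \<diamond> (I \<oplus> (m \<diamond> (I \<oplus> S) \<diamond> d) \<oplus> dnil) \<diamond> d)"
    by (rule deq_rewrite[OF deq_sym[OF cnv_id_antipode]]) (simp_all add: normalize_simps)
  also have "\<dots> = darr (I \<diamond> (dnil \<oplus> (m \<diamond> (m \<oplus> I)) \<oplus> dnil) \<diamond> (S \<oplus> I \<oplus> S) \<diamond> (I \<oplus> d) \<diamond> d)"
    by (rule deq_rewrite[OF deq_sym[OF mult_assoc]]) (simp_all add: normalize_simps)
  also have "\<dots> = darr ((m \<diamond> (m \<oplus> I) \<diamond> (S \<oplus> I \<oplus> S)) \<diamond> (dnil \<oplus> ((d \<oplus> I) \<diamond> d) \<oplus> dnil) \<diamond> I)"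
    by (rule deq_rewrite[OF deq_sym[OF comult_coassoc]]) (simp_all add: normalize_simps)
  also have "\<dots> = darr ((m \<diamond> (I \<oplus> S)) \<diamond> (dnil \<oplus> PR \<oplus> I) \<diamond> d)"
    by (rule deq_rewrite[OF cnv_antipode_id]) (simp_all add: normalize_simps)
  also have "\<dots> = darr (I \<diamond> (dnil \<oplus> S \<oplus> dnil) \<diamond> I)"
    by (rule deq_rewrite[OF cnv_PR_antipode]) (simp_all add: normalize_simps)
  also have "\<dots> = darr S"
    by (rule darr_eq_if_normalize_eq) (simp_all add: normalize_simps)
  finally show ?thesis unfolding deq_def by (simp add: normalize_simps)
qed

lemma em_antipode_mult: "deq ((em \<oplus> (S \<diamond> m)) \<diamond> (I \<oplus> cc \<oplus> I) \<diamond> (d \<oplus> d)) (S \<diamond> m)"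
proof -
  have "darr ((em \<oplus> (S \<diamond> m)) \<diamond> (I \<oplus> cc \<oplus> I) \<diamond> (d \<oplus> d)) = darr ((e \<oplus> S) \<diamond> (dnil \<oplus> (d \<diamond> m) \<oplus> dnil) \<diamond> I2)"
    by (rule deq_rewrite[OF deq_sym[OF comult_mult]]) (simp_all add: normalize_simps)
  also have "\<dots> = darr (S \<diamond> (dnil \<oplus> I \<oplus> dnil) \<diamond> m)"
    by (rule deq_rewrite[OF counit_left]) (simp_all add: normalize_simps)
  also have "\<dots> = darr (S \<diamond> m)"
    by (rule darr_eq_if_normalize_eq) (simp_all add: normalize_simps)
  finally show ?thesis unfolding deq_def by (simp add: normalize_simps)
qed

lemma antipode_em: "deq ((S \<oplus> em) \<diamond> (d \<oplus> I)) (m \<diamond> (I \<oplus> (S \<diamond> m)) \<diamond> (cc \<oplus> I) \<diamond> (I \<oplus> d))"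
proof -
  have "darr ((S \<oplus> em) \<diamond> (d \<oplus> I)) = darr ((I \<oplus> em) \<diamond> (dnil \<oplus> (m \<diamond> (S \<oplus> PL) \<diamond> d) \<oplus> I2) \<diamond> (d \<oplus> I))"
    by (rule deq_rewrite[OF deq_sym[OF cnv_antipode_PL]]) (simp_all add: normalize_simps)
  also have "\<dots> = darr (((m \<diamond> (S \<oplus> PL)) \<oplus> em) \<diamond> (dnil \<oplus> ((I \<oplus> d) \<diamond> d) \<oplus> I) \<diamond> I2)"
    by (rule deq_rewrite[OF comult_coassoc]) (simp_all add: normalize_simps)
  also have "\<dots> = darr ((m \<diamond> (S \<oplus> I)) \<diamond> (I \<oplus> (PL \<diamond> m) \<oplus> dnil) \<diamond> (d \<oplus> I))"
    by (rule deq_rewrite[OF deq_sym[OF PL_mult]]) (simp_all add: normalize_simps)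
  also have "\<dots> = darr ((m \<diamond> (S \<oplus> I)) \<diamond> (I \<oplus> (m \<diamond> (I \<oplus> S) \<diamond> d) \<oplus> dnil) \<diamond> (I \<oplus> m) \<diamond> (d \<oplus> I))"
    by (rule deq_rewrite[OF deq_sym[OF cnv_id_antipode]]) (simp_all add: normalize_simps)
  also have "\<dots> = darr (((m \<diamond> (S \<oplus> I)) \<diamond> (I \<oplus> (m \<diamond> (I \<oplus> S)))) \<diamond> (I \<oplus> ((m \<oplus> m) \<diamond> ((I \<oplus> cc) \<oplus> I) \<diamond> (d \<oplus> d)) \<oplus> dnil) \<diamond> (d \<oplus> I))"
    by (rule deq_rewrite[OF comult_mult]) (simp_all add: normalize_simps)
  also have "\<dots> = darr (I \<diamond> (dnil \<oplus> (m \<diamond> (m \<oplus> I)) \<oplus> dnil) \<diamond> (S \<oplus> I \<oplus> S) \<diamond> (I \<oplus> ((m \<oplus> m) \<diamond> ((I \<oplus> cc) \<oplus> I) \<diamond> (d \<oplus> d))) \<diamond> (d \<oplus> I))"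
    by (rule deq_rewrite[OF deq_sym[OF mult_assoc]]) (simp_all add: normalize_simps)
  also have "\<dots> = darr ((m \<diamond> (I \<oplus> S)) \<diamond> (dnil \<oplus> (m \<diamond> (m \<oplus> I)) \<oplus> I) \<diamond> (S \<oplus> I2 \<oplus> m) \<diamond> (I \<oplus> ((I \<oplus> cc \<oplus> I) \<diamond> (d \<oplus> d))) \<diamond> (d \<oplus> I))"
    by (rule deq_rewrite[OF deq_sym[OF mult_assoc]]) (simp_all add: normalize_simps)
  also have "\<dots> = darr ((m \<diamond> (I \<oplus> S) \<diamond> (m \<oplus> I) \<diamond> (m \<oplus> I2) \<diamond> (S \<oplus> I3) \<diamond> (I3 \<oplus> m) \<diamond> (I2 \<oplus> cc \<oplus> I) \<diamond> (I3 \<oplus> d)) \<diamond> (dnil \<oplus> ((d \<oplus> I) \<diamond> d) \<oplus> I) \<diamond> I2)"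
    by (rule deq_rewrite[OF deq_sym[OF comult_coassoc]]) (simp_all add: normalize_simps)
  also have "\<dots> = darr ((m \<diamond> (I \<oplus> S) \<diamond> (m \<oplus> I) \<diamond> (I2 \<oplus> m) \<diamond> (I \<oplus> cc \<oplus> I) \<diamond> (I2 \<oplus> d)) \<diamond> (dnil \<oplus> PR \<oplus> I2) \<diamond> (d \<oplus> I))"
    by (rule deq_rewrite[OF cnv_antipode_id]) (simp_all add: normalize_simps)
  also have "\<dots> = darr ((m \<diamond> (I \<oplus> S)) \<diamond> (dnil \<oplus> ((I \<oplus> em) \<diamond> (cc \<oplus> I) \<diamond> (I \<oplus> d)) \<oplus> I) \<diamond> (I2 \<oplus> m) \<diamond> (I \<oplus> cc \<oplus> I) \<diamond> (I2 \<oplus> d) \<diamond> (d \<oplus> I))"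
    by (rule deq_rewrite[OF mult_PR]) (simp_all add: normalize_simps)
  also have "\<dots> = darr ((m \<diamond> (I \<oplus> S) \<diamond> (I \<oplus> em \<oplus> I) \<diamond> (cc \<oplus> I2) \<diamond> (I3 \<oplus> m)) \<diamond> (I \<oplus> ((I \<oplus> cc) \<diamond> (cc \<oplus> I) \<diamond> (I \<oplus> d)) \<oplus> I) \<diamond> (I2 \<oplus> d) \<diamond> (d \<oplus> I))"
    by (rule deq_rewrite[OF braid_natural_comult_left]) (simp_all add: normalize_simps)
  also have "\<dots> = darr ((m \<diamond> (I \<oplus> S) \<diamond> (I \<oplus> em \<oplus> I) \<diamond> (cc \<oplus> I2) \<diamond> (I3 \<oplus> m) \<diamond> (I2 \<oplus> cc \<oplus> I) \<diamond> (I \<oplus> cc \<oplus> I2)) \<diamond> (I2 \<oplus> ((I \<oplus> d) \<diamond> d) \<oplus> dnil) \<diamond> (d \<oplus> I))"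
    by (rule deq_rewrite[OF comult_coassoc]) (simp_all add: normalize_simps)
  also have "\<dots> = darr ((m \<diamond> (I \<oplus> S) \<diamond> (I \<oplus> em \<oplus> I) \<diamond> (I3 \<oplus> m) \<diamond> (I2 \<oplus> cc \<oplus> I)) \<diamond> (dnil \<oplus> ((I \<oplus> d) \<diamond> cc) \<oplus> I2) \<diamond> (I \<oplus> ((I \<oplus> d) \<diamond> d)))"
    by (rule deq_rewrite[OF deq_sym[OF braid_natural_comult_right]]) (simp_all add: normalize_simps)
  also have "\<dots> = darr (m \<diamond> (I \<oplus> (S \<diamond> m) \<oplus> dnil) \<diamond> (cc \<oplus> I) \<diamond> (I \<oplus> d))"
    by (rule deq_rewrite[OF em_antipode_mult]) (simp_all add: normalize_simps)
  also have "\<dots> = darr (m \<diamond> (I \<oplus> (S \<diamond> m)) \<diamond> (cc \<oplus> I) \<diamond> (I \<oplus> d))"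
    by (rule darr_eq_if_normalize_eq) (simp_all add: normalize_simps)
  finally show ?thesis unfolding deq_def by (simp add: normalize_simps)
qed

end

section \<open>Weak projections\<close>

locale wproj = braided_cat C + D: wbialg C OD \<eta>D \<mu>D \<epsilon>D \<delta>D + B: whopf C OB \<eta>B \<mu>B \<epsilon>B \<delta>B lamB
  for C :: "('o,'m) bmcat" and OD \<eta>D \<mu>D \<epsilon>D \<delta>D OB \<eta>B \<mu>B \<epsilon>B \<delta>B lamB +
  fixes f g :: 'm
  assumes is_weak_projection: "weak_projection C OD \<eta>D \<mu>D \<epsilon>D \<delta>D OB \<eta>B \<mu>B \<epsilon>B \<delta>B lamB f g"
begin

abbreviation "F \<equiv> dbox (f, [OB], [OD])"
abbreviation "G \<equiv> dbox (g, [OD], [OB])"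
abbreviation "cDB \<equiv> dbox (tbr OD OB)"
abbreviation "phi \<equiv> D.m \<diamond> (D.I \<oplus> F)"
abbreviation "Kd \<equiv> (D.I \<oplus> (B.S \<diamond> G)) \<diamond> D.d"
abbreviation "T \<equiv> phi \<diamond> Kd"
abbreviation "beta \<equiv> (D.I \<oplus> (D.e \<diamond> phi)) \<diamond> (D.d \<oplus> B.I)"

lemmas weak_projection_unfolded =
  is_weak_projection[unfolded weak_projection_def algebra_morphism_def coalgebra_morphism_def]

lemma typed_fg [simp]: "typed (f, [OB], [OD])" "typed (g, [OD], [OB])"
  using weak_projection_unfolded by (auto simp: typed_def hom_iff)

lemma f_mult: "deq (F \<diamond> B.m) (D.m \<diamond> (F \<oplus> F))"
  and f_comult: "deq (D.d \<diamond> F) ((F \<oplus> F) \<diamond> B.d)"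
  and g_counit: "deq (B.e \<diamond> G) D.e" and g_comult: "deq (B.d \<diamond> G) ((G \<oplus> G) \<diamond> D.d)"
  and g_phi: "deq (G \<diamond> phi) (B.m \<diamond> (G \<oplus> B.I))"
  unfolding deq_def
  by (simp add: darr_simps; rule tarr_eqI;
      simp only: tarr_simps tbr_simps wobj_single[OF D.X_Ob] wobj_single[OF B.X_Ob] fst_conv snd_conv append.simps;
      use weak_projection_unfolded in blast)+

abbreviation "DI2 \<equiv> did [OD,OD]"

lemma braid_natural_f: "deq (D.cc \<diamond> (D.I \<oplus> F)) ((F \<oplus> D.I) \<diamond> cDB)"
  by (rule deq_normalize[OF deq_braid_natural[of D.I F]]) (simp_all add: normalize_simps)
lemma braid_natural_g: "deq ((B.I \<oplus> G) \<diamond> cDB) (B.cc \<diamond> (G \<oplus> B.I))"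
  by (rule deq_normalize[OF deq_sym[OF deq_braid_natural[of G B.I]]]) (simp_all add: normalize_simps)

lemma counit_T: "deq (D.e \<diamond> T) D.e"
proof -
  have "darr (D.e \<diamond> T) = darr (dnil \<diamond> (dnil \<oplus> (B.e \<diamond> G) \<oplus> dnil) \<diamond> T)"
    by (rule deq_rewrite[OF deq_sym[OF g_counit]]) (simp_all add: normalize_simps)
  also have "\<dots> = darr (B.e \<diamond> (dnil \<oplus> (B.m \<diamond> (G \<oplus> B.I)) \<oplus> dnil) \<diamond> (D.I \<oplus> (B.S \<diamond> G)) \<diamond> D.d)"
    by (rule deq_rewrite[OF g_phi]) (simp_all add: normalize_simps)
  also have "\<dots> = darr ((B.e \<diamond> B.m \<diamond> (B.I \<oplus> B.S)) \<diamond> (dnil \<oplus> (B.d \<diamond> G) \<oplus> dnil) \<diamond> D.I)"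
    by (rule deq_rewrite[OF deq_sym[OF g_comult]]) (simp_all add: normalize_simps)
  also have "\<dots> = darr (B.e \<diamond> (dnil \<oplus> B.PL \<oplus> dnil) \<diamond> G)"
    by (rule deq_rewrite[OF B.cnv_id_antipode]) (simp_all add: normalize_simps)
  also have "\<dots> = darr (dnil \<diamond> (dnil \<oplus> B.e \<oplus> dnil) \<diamond> G)"
    by (rule deq_rewrite[OF B.counit_PL]) (simp_all add: normalize_simps)
  also have "\<dots> = darr (dnil \<diamond> (dnil \<oplus> D.e \<oplus> dnil) \<diamond> D.I)"
    by (rule deq_rewrite[OF g_counit]) (simp_all add: normalize_simps)
  also have "\<dots> = darr D.e"
    by (rule darr_eq_if_normalize_eq) (simp_all add: normalize_simps)
  finally show ?thesis unfolding deq_def by (simp add: normalize_simps)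
qed

lemma beta_Kd: "deq (beta \<diamond> Kd) D.I"
proof -
  have "darr (beta \<diamond> Kd) = darr (((D.I \<oplus> (D.e \<diamond> phi)) \<diamond> (DI2 \<oplus> (B.S \<diamond> G))) \<diamond> (dnil \<oplus> ((D.I \<oplus> D.d) \<diamond> D.d) \<oplus> dnil) \<diamond> D.I)"
    by (rule deq_rewrite[OF D.comult_coassoc]) (simp_all add: normalize_simps)
  also have "\<dots> = darr (D.I \<diamond> (D.I \<oplus> D.e \<oplus> dnil) \<diamond> D.d)"
    by (rule deq_rewrite[OF counit_T]) (simp_all add: normalize_simps)
  also have "\<dots> = darr (D.I \<diamond> (dnil \<oplus> D.I \<oplus> dnil) \<diamond> D.I)"
    by (rule deq_rewrite[OF D.counit_right]) (simp_all add: normalize_simps)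
  also have "\<dots> = darr D.I"
    by (rule darr_eq_if_normalize_eq) (simp_all add: normalize_simps)
  finally show ?thesis unfolding deq_def by (simp add: normalize_simps)
qed

abbreviation "Om \<equiv> B.m \<diamond> (B.I \<oplus> (B.S \<diamond> B.m)) \<diamond> (B.cc \<oplus> B.I) \<diamond> (B.I \<oplus> B.d)"
abbreviation "Om' \<equiv> (B.S \<oplus> B.em) \<diamond> (B.d \<oplus> B.I)"

lemma T_phi: "deq (T \<diamond> phi) (phi \<diamond> (D.I \<oplus> Om) \<diamond> (D.I \<oplus> G \<oplus> B.I) \<diamond> (D.d \<oplus> B.I))"
proof -
  have "darr (T \<diamond> phi) = darr ((D.m \<diamond> (D.I \<oplus> F) \<diamond> (D.I \<oplus> (B.S \<diamond> G))) \<diamond> (dnil \<oplus> ((D.m \<oplus> D.m) \<diamond> ((D.I \<oplus> D.cc) \<oplus> D.I) \<diamond> (D.d \<oplus> D.d)) \<oplus> dnil) \<diamond> (D.I \<oplus> F))"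
    by (rule deq_rewrite[OF D.comult_mult]) (simp_all add: normalize_simps)
  also have "\<dots> = darr ((D.m \<diamond> (D.I \<oplus> F) \<diamond> (D.I \<oplus> (B.S \<diamond> G)) \<diamond> (D.m \<oplus> D.m) \<diamond> ((D.I \<oplus> D.cc) \<oplus> D.I) \<diamond> (D.d \<oplus> DI2)) \<diamond>
      (D.I \<oplus> ((F \<oplus> F) \<diamond> B.d) \<oplus> dnil) \<diamond> (D.I \<oplus> B.I))"
    by (rule deq_rewrite[OF f_comult]) (simp_all add: normalize_simps)
  also have "\<dots> = darr ((D.m \<diamond> (D.I \<oplus> F) \<diamond> (D.I \<oplus> (B.S \<diamond> G)) \<diamond> (D.m \<oplus> D.m)) \<diamond>
      (D.I \<oplus> ((F \<oplus> D.I) \<diamond> cDB) \<oplus> D.I) \<diamond> (D.d \<oplus> B.I \<oplus> F) \<diamond> (D.I \<oplus> B.d))"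
    by (rule deq_rewrite[OF braid_natural_f]) (simp_all add: normalize_simps)
  also have "\<dots> = darr ((D.m \<diamond> (D.I \<oplus> F) \<diamond> (D.I \<oplus> B.S) \<diamond> (D.m \<oplus> B.I)) \<diamond>
      (DI2 \<oplus> (B.m \<diamond> (G \<oplus> B.I)) \<oplus> dnil) \<diamond> (D.I \<oplus> ((F \<oplus> D.I) \<diamond> cDB) \<oplus> B.I) \<diamond> (D.d \<oplus> B.I \<oplus> B.I) \<diamond> (D.I \<oplus> B.d))"
    by (rule deq_rewrite[OF g_phi]) (simp_all add: normalize_simps)
  also have "\<dots> = darr (D.I \<diamond> (dnil \<oplus> (D.m \<diamond> (D.I \<oplus> D.m)) \<oplus> dnil) \<diamond> (DI2 \<oplus> (F \<diamond> B.S \<diamond> B.m \<diamond> (G \<oplus> B.I))) \<diamond>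
      (D.I \<oplus> ((F \<oplus> D.I) \<diamond> cDB) \<oplus> B.I) \<diamond> (D.d \<oplus> B.I \<oplus> B.I) \<diamond> (D.I \<oplus> B.d))"
    by (rule deq_rewrite[OF D.mult_assoc]) (simp_all add: normalize_simps)
  also have "\<dots> = darr (D.m \<diamond> (D.I \<oplus> (F \<diamond> B.m) \<oplus> dnil) \<diamond> (D.I \<oplus> B.I \<oplus> (B.S \<diamond> B.m \<diamond> (G \<oplus> B.I))) \<diamond>
      (D.I \<oplus> cDB \<oplus> B.I) \<diamond> (D.d \<oplus> B.I \<oplus> B.I) \<diamond> (D.I \<oplus> B.d))"
    by (rule deq_rewrite[OF deq_sym[OF f_mult]]) (simp_all add: normalize_simps)
  also have "\<dots> = darr ((D.m \<diamond> (D.I \<oplus> F) \<diamond> (D.I \<oplus> B.m) \<diamond> (D.I \<oplus> B.I \<oplus> B.S) \<diamond> (D.I \<oplus> B.I \<oplus> B.m)) \<diamond>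
      (D.I \<oplus> (B.cc \<diamond> (G \<oplus> B.I)) \<oplus> B.I) \<diamond> (D.d \<oplus> B.I \<oplus> B.I) \<diamond> (D.I \<oplus> B.d))"
    by (rule deq_rewrite[OF braid_natural_g]) (simp_all add: normalize_simps)
  also have "\<dots> = darr (phi \<diamond> (D.I \<oplus> Om) \<diamond> (D.I \<oplus> G \<oplus> B.I) \<diamond> (D.d \<oplus> B.I))"
    by (rule darr_eq_if_normalize_eq) (simp_all add: normalize_simps)
  finally show ?thesis unfolding deq_def by (simp add: normalize_simps)
qed

lemma T_beta: "deq (T \<diamond> beta) (phi \<diamond> (D.I \<oplus> Om') \<diamond> (D.I \<oplus> G \<oplus> B.I) \<diamond> (D.d \<oplus> B.I))"
proof -
  have "darr (T \<diamond> beta) = darr (T \<diamond> (D.I \<oplus> (B.e \<diamond> G) \<oplus> dnil) \<diamond> (D.I \<oplus> phi) \<diamond> (D.d \<oplus> B.I))"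
    by (rule deq_rewrite[OF deq_sym[OF g_counit]]) (simp_all add: normalize_simps)
  also have "\<dots> = darr ((T \<diamond> (D.I \<oplus> B.e)) \<diamond> (D.I \<oplus> (B.m \<diamond> (G \<oplus> B.I)) \<oplus> dnil) \<diamond> (D.d \<oplus> B.I))"
    by (rule deq_rewrite[OF g_phi]) (simp_all add: normalize_simps)
  also have "\<dots> = darr ((D.m \<diamond> (D.I \<oplus> F) \<diamond> (D.I \<oplus> B.S) \<diamond> (D.I \<oplus> B.I \<oplus> B.e) \<diamond> (D.I \<oplus> B.I \<oplus> B.m) \<diamond> (D.I \<oplus> G \<oplus> G \<oplus> B.I)) \<diamond>
      (dnil \<oplus> ((D.I \<oplus> D.d) \<diamond> D.d) \<oplus> B.I) \<diamond> (D.I \<oplus> B.I))"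
    by (rule deq_rewrite[OF D.comult_coassoc]) (simp_all add: normalize_simps)
  also have "\<dots> = darr ((D.m \<diamond> (D.I \<oplus> F) \<diamond> (D.I \<oplus> B.S) \<diamond> (D.I \<oplus> B.I \<oplus> B.e) \<diamond> (D.I \<oplus> B.I \<oplus> B.m)) \<diamond>
      (D.I \<oplus> (B.d \<diamond> G) \<oplus> B.I) \<diamond> (D.d \<oplus> B.I))"
    by (rule deq_rewrite[OF deq_sym[OF g_comult]]) (simp_all add: normalize_simps)
  also have "\<dots> = darr (phi \<diamond> (D.I \<oplus> Om') \<diamond> (D.I \<oplus> G \<oplus> B.I) \<diamond> (D.d \<oplus> B.I))"
    by (rule darr_eq_if_normalize_eq) (simp_all add: normalize_simps)
  finally show ?thesis unfolding deq_def by (simp add: normalize_simps)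
qed

lemma T_phi_eq_T_beta: "deq (T \<diamond> phi) (T \<diamond> beta)"
proof -
  have "darr (T \<diamond> phi) = darr (phi \<diamond> (D.I \<oplus> Om) \<diamond> (D.I \<oplus> G \<oplus> B.I) \<diamond> (D.d \<oplus> B.I))"
    using T_phi by (simp add: deq_def)
  also have "\<dots> = darr (phi \<diamond> (D.I \<oplus> Om' \<oplus> dnil) \<diamond> (D.I \<oplus> G \<oplus> B.I) \<diamond> (D.d \<oplus> B.I))"
    by (rule deq_rewrite[OF deq_sym[OF B.antipode_em]]) (simp_all add: normalize_simps)
  also have "\<dots> = darr (phi \<diamond> (D.I \<oplus> Om') \<diamond> (D.I \<oplus> G \<oplus> B.I) \<diamond> (D.d \<oplus> B.I))"
    by (rule darr_eq_if_normalize_eq) (simp_all add: normalize_simps)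
  also have "\<dots> = darr (T \<diamond> beta)"
    using T_beta by (simp add: deq_def)
  finally show ?thesis unfolding deq_def by (simp add: normalize_simps)
qed

lemma darr_phi: "darr phi = (phiD C OD \<mu>D f, [OD,OB], [OD])" and wfd_phi: "wfd phi"
  and darr_beta: "darr beta = (betaD C OD OB \<mu>D \<epsilon>D \<delta>D f, [OD,OB], [OD])" and wfd_beta: "wfd beta"
  and darr_Kd: "darr Kd = ((Id OD \<otimes> (lamB \<bullet> g)) \<bullet> \<delta>D, [OD], [OD,OB])" and wfd_Kd: "wfd Kd"
  by (simp_all add: darr_simps, (rule tarr_eqI, simp_all add: phiD_def betaD_def)+)

lemma darr_T: "darr T = (tBD C OD \<mu>D \<delta>D lamB f g, [OD], [OD])"
  using darr_phi wfd_phi darr_Kd wfd_Kd by (simp add: darr_dcmp dbounds_simps cmp_def tBD_def)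

lemma tBD_coequalizer_data:
  defines "k \<equiv> (Id OD \<otimes> (lamB \<bullet> g)) \<bullet> \<delta>D"
  shows "phiD C OD \<mu>D f \<in> hom C (OD \<odot> OB) OD" and "betaD C OD OB \<mu>D \<epsilon>D \<delta>D f \<in> hom C (OD \<odot> OB) OD"
    and "k \<in> hom C OD (OD \<odot> OB)"
    and "tBD C OD \<mu>D \<delta>D lamB f g = phiD C OD \<mu>D f \<bullet> k"
    and "tBD C OD \<mu>D \<delta>D lamB f g \<bullet> phiD C OD \<mu>D f = tBD C OD \<mu>D \<delta>D lamB f g \<bullet> betaD C OD OB \<mu>D \<epsilon>D \<delta>D f"
    and "betaD C OD OB \<mu>D \<epsilon>D \<delta>D f \<bullet> k = Id OD"
proof -
  have wfd_T: "wfd T"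
    using wfd_phi wfd_Kd darr_typed[OF wfd_Kd] by (simp add: wfd_dcmp dbounds_simps)
  show "phiD C OD \<mu>D f \<in> hom C (OD \<odot> OB) OD" "betaD C OD OB \<mu>D \<epsilon>D \<delta>D f \<in> hom C (OD \<odot> OB) OD"
    "k \<in> hom C OD (OD \<odot> OB)"
    using darr_typed[OF wfd_phi] darr_typed[OF wfd_beta] darr_typed[OF wfd_Kd]
    by (simp_all add: darr_phi darr_beta darr_Kd k_def typed_def hom_iff wobj_Cons dbounds_simps)
  show "tBD C OD \<mu>D \<delta>D lamB f g = phiD C OD \<mu>D f \<bullet> k"
    by (simp add: tBD_def k_def)
  show "tBD C OD \<mu>D \<delta>D lamB f g \<bullet> phiD C OD \<mu>D f = tBD C OD \<mu>D \<delta>D lamB f g \<bullet> betaD C OD OB \<mu>D \<epsilon>D \<delta>D f"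
    using T_phi_eq_T_beta wfd_T wfd_phi wfd_beta darr_T darr_phi darr_beta
    unfolding deq_def by (simp add: darr_dcmp dbounds_simps cmp_def)
  show "betaD C OD OB \<mu>D \<epsilon>D \<delta>D f \<bullet> k = Id OD"
    using beta_Kd wfd_beta wfd_Kd darr_beta darr_Kd
    unfolding deq_def by (simp add: darr_dcmp darr_did dbounds_simps cmp_def tid_def k_def)
qed

end

lemma wproj_if_weak_projection:
  assumes "braided_strict_monoidal C"
    and "weak_projection C D \<eta>D \<mu>D \<epsilon>D \<delta>D B \<eta>B \<mu>B \<epsilon>B \<delta>B lamB f g"
  shows "wproj C D \<eta>D \<mu>D \<epsilon>D \<delta>D B \<eta>B \<mu>B \<epsilon>B \<delta>B lamB f g"
  using braided_cat_if_braided_strict_monoidal[OF assms(1)] assms(2)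
  unfolding wproj_def wproj_axioms_def whopf_def whopf_axioms_def wbialg_def wbialg_axioms_def
  by (auto simp: weak_projection_def weak_hopf_algebra_def)

theorem proposition3p4:
  fixes C :: "('o,'m) bmcat"
    and D B :: 'o
    and \<eta>D \<mu>D \<epsilon>D \<delta>D \<eta>B \<mu>B \<epsilon>B \<delta>B lamB f g :: 'm
  assumes "braided_strict_monoidal C"
    and "weak_projection C D \<eta>D \<mu>D \<epsilon>D \<delta>D B \<eta>B \<mu>B \<epsilon>B \<delta>B lamB f g"
  shows "cComp C (tBD C D \<mu>D \<delta>D lamB f g) (tBD C D \<mu>D \<delta>D lamB f g) = tBD C D \<mu>D \<delta>D lamB f g
     \<and> (\<forall>DB p i. DB \<in> cObj C \<and> p \<in> hom C D DB \<and> i \<in> hom C DB D \<and>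
          cComp C i p = tBD C D \<mu>D \<delta>D lamB f g \<and> cComp C p i = cId C DB \<longrightarrow>
          is_coequalizer C (cTo C D B) D DB (phiD C D \<mu>D f) (betaD C D B \<mu>D \<epsilon>D \<delta>D f) p)"
proof -
  interpret wproj C D \<eta>D \<mu>D \<epsilon>D \<delta>D B \<eta>B \<mu>B \<epsilon>B \<delta>B lamB f g
    using assms by (rule wproj_if_weak_projection)
  show ?thesis
    using coequalizer_of_section_factorization[OF tBD_coequalizer_data] by blast
qed

end
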